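(* Let $M$ be a rooted planar map with $n$ edges and $\operatorname{outv}(M) = k$. Then there are exactly $k+1$ one-corner components $U_0, U_1, \ldots, U_k$ with $\Pi(U_i) = M$; each has $n+1$ edges, and $\operatorname{outv}_{\mathcal{U}}(U_i) = i$ for each $0 \leq i \leq k$.
   Context: A rooted planar map is a planar map with a marked corner on the outer face (the root corner), whose vertex is the root vertex; the empty map is a single vertex. The root edge is the edge next to the root corner in clockwise order. $\operatorname{outv}(M)$ is the number of vertices of $M$ incident to the outer face. A one-corner component is a rooted planar map whose root corner is the only corner of the root vertex lying on the outer face (the empty map is one). For a one-corner component $U$, $\operatorname{outv}_{\mathcal{U}}(U)$ is the number of vertices of $U$ incident to the outer face other than the root vertex. For a non-empty one-corner component $U$ with root vertex $v$ and root edge $e$ (possibly a loop), $\Pi(U)$ is the rooted planar map obtained by deleting $e$ and re-rooting at the corner from which the other end of $e$ stems. *)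

theory Defs
  imports Main
begin

text \<open>
Rooted planar maps, encoded combinatorially (rotation systems).
A map is given by a finite set of darts (half-edges) D, a fixed-point-free
involution alpha on D (the two halves of an edge), and a permutation sigma of D
(sigma d = next dart counterclockwise around the vertex of d).
Vertices = sigma-orbits, edges = alpha-orbits.  A corner is identified with the dart d
at which it starts: corner d is the angular sector from d counterclockwise to sigma d.
The corner following corner d along its face is alpha (sigma d), so faces are the
orbits of alpha o sigma (as sets of corners).  The root is a dart r: the root corner is
corner r, the root vertex is the vertex of r, and the root edge (next to the root corner
in clockwise order) is the edge of r.  The outer face is the face containing the root
corner.  The empty map (single vertex, no edges) is the map with no darts.
Rooted maps are considered up to root-preserving orientation-preserving isomorphism.
\<close>

record dmap =
  darts :: "nat set"
  alpha :: "nat \<Rightarrow> nat"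
  sigma :: "nat \<Rightarrow> nat"
  root  :: nat

definition orb :: "(nat \<Rightarrow> nat) \<Rightarrow> nat \<Rightarrow> nat set" where
  "orb f x = {(f ^^ j) x | j. True}"

definition phi :: "dmap \<Rightarrow> nat \<Rightarrow> nat" where
  "phi M = alpha M \<circ> sigma M"

definition nedges :: "dmap \<Rightarrow> nat" where
  "nedges M = card (darts M) div 2"

definition nvertices :: "dmap \<Rightarrow> nat" where
  "nvertices M = (if darts M = {} then 1 else card (orb (sigma M) ` darts M))"

definition nfaces :: "dmap \<Rightarrow> nat" where
  "nfaces M = (if darts M = {} then 1 else card (orb (phi M) ` darts M))"

definition connected_map :: "dmap \<Rightarrow> bool" where
  "connected_map M \<longleftrightarrow>
     (\<forall>x\<in>darts M. \<forall>y\<in>darts M.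
        (x, y) \<in> ({(d, alpha M d) | d. d \<in> darts M} \<union> {(d, sigma M d) | d. d \<in> darts M})\<^sup>*)"

definition rooted_planar_map :: "dmap \<Rightarrow> bool" where
  "rooted_planar_map M \<longleftrightarrow>
     finite (darts M) \<and>
     (\<forall>x\<in>darts M. alpha M x \<in> darts M \<and> alpha M x \<noteq> x \<and> alpha M (alpha M x) = x) \<and>
     bij_betw (sigma M) (darts M) (darts M) \<and>
     connected_map M \<and>
     nvertices M + nfaces M = nedges M + 2 \<and>
     (darts M \<noteq> {} \<longrightarrow> root M \<in> darts M)"

definition map_iso :: "dmap \<Rightarrow> dmap \<Rightarrow> bool" where
  "map_iso M N \<longleftrightarrow>
     (\<exists>f. bij_betw f (darts M) (darts N) \<and>
          (\<forall>x\<in>darts M. f (alpha M x) = alpha N (f x) \<and> f (sigma M x) = sigma N (f x)) \<and>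
          (darts M \<noteq> {} \<longrightarrow> f (root M) = root N))"

definition outer_face :: "dmap \<Rightarrow> nat set" where
  "outer_face M = orb (phi M) (root M)"

definition outv :: "dmap \<Rightarrow> nat" where
  "outv M = (if darts M = {} then 1
             else card (orb (sigma M) ` outer_face M))"

definition one_corner :: "dmap \<Rightarrow> bool" where
  "one_corner U \<longleftrightarrow> rooted_planar_map U \<and>
     (darts U = {} \<or> orb (sigma U) (root U) \<inter> outer_face U = {root U})"

definition outvU :: "dmap \<Rightarrow> nat" where
  "outvU U = outv U - 1"

text \<open>The operation Pi: delete the root edge {r, alpha r}, and re-root at the corner
(of the new map) in which the other end alpha r of the root edge stemmed.  The rotation
around each vertex skips the deleted darts.\<close>
definition skip_next :: "dmap \<Rightarrow> nat \<Rightarrow> nat" where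
  "skip_next U x =
     (let del = {root U, alpha U (root U)}
      in (sigma U ^^ (LEAST j. 0 < j \<and> (sigma U ^^ j) x \<notin> del)) x)"

definition Pi :: "dmap \<Rightarrow> dmap" where
  "Pi U =
     (let D' = darts U - {root U, alpha U (root U)}
      in \<lparr> darts = D', alpha = alpha U, sigma = skip_next U,
           root = (if D' = {} then 0
                   else (THE d. d \<in> D' \<and> skip_next U d = skip_next U (alpha U (root U)))) \<rparr>)"

end

theory Submission
  imports Defs "HOL-Combinatorics.Cycles"
begin

text \<open>
  Let \<open>U\<close> be a one-corner component with \<open>Pi U \<cong> M\<close>, and let \<open>{a, b}\<close> be its root edge,
  \<open>b\<close> being the root dart.  Since \<open>Pi\<close> re-roots at the corner in which \<open>a\<close> stemmed, \<open>a\<close>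
  sits right after the root corner of \<open>M\<close> in the rotation of \<open>U\<close>, while \<open>b\<close> is either a
  new leaf or sits right after some dart \<open>x\<close>; conversely every such extension of \<open>M\<close> is
  mapped back to \<open>M\<close> by \<open>Pi\<close>.  The extension is a one-corner component exactly when \<open>b\<close>
  is a leaf, or \<open>x\<close> is a corner of the outer face of \<open>M\<close> at which the walk around the
  outer face (starting after the root corner) visits the vertex of \<open>x\<close> for the last time.
  In the latter case the new edge splits the outer face, the new outer face consists of
  \<open>b\<close> and the rest of the walk after \<open>x\<close>, and \<open>outvU U\<close> is the number of vertices met on
  that rest.  This number strictly decreases along the walk; as there is one last visit
  per vertex of the outer face, the last visits give the values \<open>0, \<dots>, k - 1\<close>, and the
  leaf gives \<open>k\<close>.  When \<open>M\<close> is empty the two preimages are a loop and a single edge.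
\<close>

text \<open>\<open>FuncSet.Pi\<close>, imported with \<open>Cycles\<close>, would shadow the operation \<open>Pi\<close> on maps.\<close>
hide_const (open) FuncSet.Pi

section \<open>Orbits of a function\<close>

lemma orb_funpow [simp]: "(f ^^ j) x \<in> orb f x"
  by (auto simp: orb_def)

lemma orb_self [simp]: "x \<in> orb f x"
  using orb_funpow[of 0 f x] by simp

lemma orb_step: "y \<in> orb f x \<Longrightarrow> f y \<in> orb f x"
proof -
  assume "y \<in> orb f x"
  then obtain j where "y = (f ^^ j) x" by (auto simp: orb_def)
  then have "f y = (f ^^ Suc j) x" by simp
  then show ?thesis by (metis orb_funpow)
qed

lemma orb_apply_self [simp]: "f x \<in> orb f x"
  by (rule orb_step) simp

lemma orb_trans: "y \<in> orb f x \<Longrightarrow> orb f y \<subseteq> orb f x"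
proof
  fix z assume "y \<in> orb f x" "z \<in> orb f y"
  then obtain i j where "y = (f ^^ j) x" "z = (f ^^ i) y" by (auto simp: orb_def)
  then have "z = (f ^^ (i + j)) x" by (simp add: funpow_add)
  then show "z \<in> orb f x" by (metis orb_funpow)
qed

lemma orb_subsetI:
  assumes "x \<in> T" "\<And>y. y \<in> T \<Longrightarrow> y \<in> orb f x \<Longrightarrow> f y \<in> T"
  shows "orb f x \<subseteq> T"
proof
  fix z assume "z \<in> orb f x"
  then obtain j where z: "z = (f ^^ j) x" by (auto simp: orb_def)
  have "(f ^^ j) x \<in> T" by (induction j) (use assms in auto)
  then show "z \<in> T" using z by simp
qed

lemma orb_fixpoint: "f x = x \<Longrightarrow> orb f x = {x}"
proof -
  assume fx: "f x = x"
  have "(f ^^ j) x = x" for j by (induction j) (use fx in auto)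
  then show ?thesis by (auto simp: orb_def)
qed

lemma funpow_in_bij_betw: "bij_betw f S S \<Longrightarrow> x \<in> S \<Longrightarrow> (f ^^ j) x \<in> S"
  by (induction j) (auto simp: bij_betw_def)

lemma orb_subset_bij_betw: "bij_betw f S S \<Longrightarrow> x \<in> S \<Longrightarrow> orb f x \<subseteq> S"
  using funpow_in_bij_betw by (auto simp: orb_def)

lemma funpow_diff_return:
  assumes "bij_betw f S S" "x \<in> S" "i < j" "(f ^^ i) x = (f ^^ j) x"
  shows "(f ^^ (j - i)) x = x"
proof -
  have "(f ^^ i) ((f ^^ (j - i)) x) = (f ^^ i) x"
    using assms(3,4) by (simp add: funpow_add[symmetric, THEN fun_cong, simplified])
  moreover have "inj_on (f ^^ i) S" using bij_betw_funpow[OF assms(1)] bij_betw_def by blast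
  moreover have "(f ^^ (j - i)) x \<in> S" using funpow_in_bij_betw[OF assms(1,2)] .
  ultimately show ?thesis using assms(2) by (auto simp: inj_on_def)
qed

lemma funpow_return_exists:
  assumes "finite S" "bij_betw f S S" "x \<in> S"
  shows "\<exists>n>0. (f ^^ n) x = x"
proof -
  let ?g = "\<lambda>j. (f ^^ j) x"
  have "?g ` {0..card S} \<subseteq> S" using funpow_in_bij_betw[OF assms(2,3)] by auto
  then have "card (?g ` {0..card S}) \<le> card S" by (simp add: card_mono assms(1))
  then have "\<not> inj_on ?g {0..card S}"
    using card_image by fastforce
  then obtain i j where "i \<noteq> j" "?g i = ?g j"
    by (auto simp: inj_on_def)
  then obtain i j where "i < j" "?g i = ?g j"
    by (metis linorder_neqE_nat)
  then show ?thesis using funpow_diff_return[OF assms(2,3)] by (intro exI[of _ "j - i"]) auto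
qed

lemma least_power_bij_betw:
  assumes "finite S" "bij_betw f S S" "x \<in> S"
  shows "0 < least_power f x" "(f ^^ least_power f x) x = x"
    "\<And>t. 0 < t \<Longrightarrow> t < least_power f x \<Longrightarrow> (f ^^ t) x \<noteq> x"
proof -
  obtain n where n: "(f ^^ n) x = x" "0 < n" using funpow_return_exists[OF assms] by blast
  show "0 < least_power f x" "(f ^^ least_power f x) x = x"
    using least_powerI[OF n] by auto
  fix t assume "0 < t" "t < least_power f x"
  then show "(f ^^ t) x \<noteq> x" using least_power_le[where f=f and n=t and x=x] by auto
qed

lemma funpow_mod_least_power:
  assumes "finite S" "bij_betw f S S" "x \<in> S"
  shows "(f ^^ j) x = (f ^^ (j mod least_power f x)) x"
  using funpow_mod_eq[where f=f and n="least_power f x" and x=x and m=j] least_power_bij_betw[OF assms] by simp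

lemma orb_sym:
  assumes "finite S" "bij_betw f S S" "x \<in> S" "y \<in> orb f x"
  shows "x \<in> orb f y"
proof -
  obtain j where y: "y = (f ^^ j) x" using assms(4) by (auto simp: orb_def)
  let ?p = "least_power f x"
  have "0 < ?p" using least_power_bij_betw[OF assms(1-3)] by simp
  then have e: "?p * (j + 1) - j + j = ?p * (j + 1)" by (cases ?p) auto
  have "(f ^^ (?p * (j + 1) - j)) y = (f ^^ (?p * (j + 1) - j + j)) x"
    using y by (simp add: funpow_add)
  also have "\<dots> = (f ^^ (?p * (j + 1))) x" using e by simp
  also have "\<dots> = x"
    using funpow_mod_least_power[OF assms(1-3), of "?p * (j + 1)"] by simp
  finally show ?thesis by (metis orb_funpow)
qed

lemma orb_eq:
  assumes "finite S" "bij_betw f S S" "x \<in> S" "y \<in> orb f x"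
  shows "orb f y = orb f x"
  using orb_trans[OF assms(4)] orb_trans[OF orb_sym[OF assms]] by blast

lemma orb_meet:
  assumes "finite S" "bij_betw f S S" "x \<in> S" "y \<in> S" "z \<in> orb f x" "z \<in> orb f y"
  shows "orb f x = orb f y"
  using orb_eq[OF assms(1-3,5)] orb_eq[OF assms(1,2,4,6)] by simp

lemma orb_least_power:
  assumes "finite S" "bij_betw f S S" "x \<in> S" "y \<in> orb f x"
  shows "\<exists>t. 0 < t \<and> t \<le> least_power f x \<and> y = (f ^^ t) x"
proof -
  obtain j where y: "y = (f ^^ j) x" using assms(4) by (auto simp: orb_def)
  let ?p = "least_power f x"
  have p: "0 < ?p" "(f ^^ ?p) x = x" using least_power_bij_betw[OF assms(1-3)] by auto
  show ?thesis
  proof (cases "j mod ?p = 0")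
    case True
    then show ?thesis using y p funpow_mod_least_power[OF assms(1-3), of j]
      by (intro exI[of _ ?p]) auto
  next
    case False
    then show ?thesis using y p funpow_mod_least_power[OF assms(1-3), of j]
      by (intro exI[of _ "j mod ?p"]) (auto intro: less_imp_le)
  qed
qed

lemma orb_eq_image_least_power:
  assumes "finite S" "bij_betw f S S" "x \<in> S"
  shows "orb f x = (\<lambda>t. (f ^^ t) x) ` {1..least_power f x}"
proof
  show "orb f x \<subseteq> (\<lambda>t. (f ^^ t) x) ` {1..least_power f x}"
    using orb_least_power[OF assms] by (fastforce simp: Suc_le_eq)
qed auto

lemma funpow_neq_before_least_power:
  assumes "finite S" "bij_betw f S S" "x \<in> S" "i < j" "j - i < least_power f x"
  shows "(f ^^ i) x \<noteq> (f ^^ j) x"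
  using funpow_diff_return[OF assms(2,3,4)] least_power_bij_betw(3)[OF assms(1-3), of "j - i"] assms(4,5)
  by auto

lemma orb_cong:
  assumes "\<And>y. y \<in> orb f x \<Longrightarrow> g y = f y"
  shows "orb g x = orb f x"
proof -
  have "(g ^^ j) x = (f ^^ j) x" for j
    by (induction j) (use assms in auto)
  then show ?thesis by (simp add: orb_def)
qed

lemma orb_walk:
  assumes "g c = w i" "\<And>t. i \<le> t \<Longrightarrow> t < j \<Longrightarrow> g (w t) = w (Suc t)" "i \<le> t" "t \<le> j"
  shows "w t \<in> orb g c"
proof -
  have "w (i + d) \<in> orb g c" if "i + d \<le> j" for d
    using that
  proof (induction d)
    case 0
    then show ?case using assms(1) orb_apply_self[of g c] by simp
  next
    case (Suc d)
    then have "g (w (i + d)) \<in> orb g c" by (intro orb_step) simp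
    then show ?case using assms(2)[of "i + d"] Suc.prems by simp
  qed
  then show ?thesis using assms(3,4) by (metis le_add_diff_inverse)
qed

lemma orb_closed_walk:
  assumes "g c = w i" "\<And>t. i \<le> t \<Longrightarrow> t < j \<Longrightarrow> g (w t) = w (Suc t)" "g (w j) = c" "i \<le> j"
  shows "orb g c = insert c (w ` {i..j})"
proof
  show "orb g c \<subseteq> insert c (w ` {i..j})"
  proof (rule orb_subsetI)
    fix y assume "y \<in> insert c (w ` {i..j})"
    then consider "y = c" | t where "y = w t" "i \<le> t" "t \<le> j" by auto
    then show "g y \<in> insert c (w ` {i..j})"
    proof cases
      case 1
      then show ?thesis using assms(1,4) by auto
    next
      case (2 t)
      then show ?thesis using assms(2,3) by (cases "t = j") auto
    qed
  qed simp
  show "insert c (w ` {i..j}) \<subseteq> orb g c"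
    using orb_walk[of g c w i j] assms(1,2) by auto
qed

section \<open>Local surgery on permutations\<close>

lemma bij_betw_insert_point:
  assumes fin: "finite S" and bf: "bij_betw f S S" and pS: "p \<in> S"
    and g1: "g p = n" and g2: "g n = f p" and g3: "\<forall>z\<in>S-{p}. g z = f z"
  shows "bij_betw g (insert n S) (insert n S)"
proof -
  have "g ` insert n S = insert (g n) (insert (g p) (g ` (S - {p})))"
    using pS by (auto simp flip: insert_Diff)
  also have "\<dots> = insert n (f ` S)"
    using g1 g2 g3 pS by (auto simp: image_iff)
  also have "\<dots> = insert n S"
    using bf by (simp add: bij_betw_def)
  finally have img: "g ` insert n S = insert n S" .
  then have "inj_on g (insert n S)" using finite_surj_inj[of "insert n S" g] fin by auto
  then show ?thesis using img by (simp add: bij_betw_def)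
qed

lemma orb_insert_point:
  assumes fin: "finite S" and bf: "bij_betw f S S" and pS: "p \<in> S" and nS: "n \<notin> S"
    and g1: "g p = n" and g2: "g n = f p" and g3: "\<forall>z\<in>S-{p}. g z = f z"
  shows "orb g p = insert n (orb f p)" "orb g n = insert n (orb f p)"
    "\<And>z. z \<in> S \<Longrightarrow> orb g z \<inter> S = orb f z"
proof -
  let ?w = "\<lambda>t. (f ^^ t) p" and ?m = "least_power f p"
  have m: "0 < ?m" "?w ?m = p" "\<And>t. 0 < t \<Longrightarrow> t < ?m \<Longrightarrow> ?w t \<noteq> p"
    using least_power_bij_betw[OF fin bf pS] by auto
  have "g (?w t) = ?w (Suc t)" if "1 \<le> t" "t < ?m" for t
    using g3 m(3)[of t] that funpow_in_bij_betw[OF bf pS, of t] by auto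
  then have "orb g n = insert n (?w ` {1..?m})"
    using g1 g2 m(1,2) by (intro orb_closed_walk) auto
  then have gn: "orb g n = insert n (orb f p)"
    using orb_eq_image_least_power[OF fin bf pS] by simp
  have "p \<in> orb g n" "n \<in> orb g p" using gn g1 orb_apply_self[of g p] by auto
  then show gp: "orb g p = insert n (orb f p)"
    using gn orb_trans by blast
  show "orb g n = insert n (orb f p)" by (rule gn)
  fix z assume zS: "z \<in> S"
  have sub: "orb f z \<subseteq> S" "orb f p \<subseteq> S" using orb_subset_bij_betw[OF bf] zS pS by auto
  show "orb g z \<inter> S = orb f z"
  proof (cases "p \<in> orb f z")
    case True
    then have fz: "orb f z = orb f p" using orb_eq[OF fin bf zS True] by simp
    have "z \<in> orb g p" using gp fz by auto
    then have "orb g z = orb g p"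
      using orb_eq[OF _ bij_betw_insert_point[OF fin bf pS g1 g2 g3]] fin pS by simp
    moreover note fz
    ultimately show ?thesis using gp nS sub by auto
  next
    case False
    have "orb g z = orb f z"
      using False sub(1) g3 by (intro orb_cong) auto
    then show ?thesis using sub(1) by auto
  qed
qed

lemma bij_betw_add_fixpoint:
  assumes "bij_betw f S S" "n \<notin> S" "g n = n" "\<forall>z\<in>S. g z = f z"
  shows "bij_betw g (insert n S) (insert n S)"
proof -
  have "bij_betw g S S" using assms(1) bij_betw_cong[of S g f S] assms(4) by simp
  then have i: "inj_on g S" and im: "g ` S = S" by (auto simp: bij_betw_def)
  have "inj_on g (insert n S)" using i im assms(2,3) by (simp add: inj_on_insert)
  moreover have "g ` insert n S = insert n S" using im assms(3) by simp
  ultimately show ?thesis by (simp add: bij_betw_def)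
qed

lemma orb_add_fixpoint:
  assumes bf: "bij_betw f S S" and g1: "g n = n" and g2: "\<forall>z\<in>S. g z = f z"
  shows "orb g n = {n}" "\<And>z. z \<in> S \<Longrightarrow> orb g z = orb f z"
proof -
  show "orb g n = {n}" using g1 by (rule orb_fixpoint)
  fix z assume "z \<in> S"
  then show "orb g z = orb f z" using g2 orb_subset_bij_betw[OF bf] by (intro orb_cong) auto
qed

lemma orb_split_cycle:
  assumes fin: "finite S" and bf: "bij_betw f S S" and rS: "r \<in> S"
    and s: "0 < s" "s < least_power f r" and x: "x = (f ^^ s) r"
    and g1: "g r = b" and g2: "g b = f x" and g3: "g x = a" and g4: "g a = f r"
    and g5: "\<forall>z\<in>S-{r,x}. g z = f z"
  shows "orb g b = insert b ((\<lambda>t. (f ^^ t) r) ` {Suc s..least_power f r})"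
    "orb g a = insert a ((\<lambda>t. (f ^^ t) r) ` {1..s})"
    "\<And>z. z \<in> S \<Longrightarrow> z \<notin> orb f r \<Longrightarrow> orb g z = orb f z"
proof -
  let ?w = "\<lambda>t. (f ^^ t) r" and ?m = "least_power f r"
  have m: "?w ?m = r" "\<And>t. 0 < t \<Longrightarrow> t < ?m \<Longrightarrow> ?w t \<noteq> r"
    using least_power_bij_betw[OF fin bf rS] by auto
  have "?w t \<noteq> x" if "0 < t" "t < ?m" "t \<noteq> s" for t
  proof (cases "t < s")
    case True
    then show ?thesis using funpow_neq_before_least_power[OF fin bf rS, of t s] x s by auto
  next
    case False
    then have "s < t" "t - s < ?m" using that by auto
    then show ?thesis using funpow_neq_before_least_power[OF fin bf rS, of s t] x by auto
  qed
  then have step: "g (?w t) = ?w (Suc t)" if "0 < t" "t < ?m" "t \<noteq> s" for t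
    using g5 funpow_in_bij_betw[OF bf rS, of t] m(2) that by auto
  show "orb g b = insert b (?w ` {Suc s..?m})"
    using g1 g2 x m(1) s step by (intro orb_closed_walk) auto
  show "orb g a = insert a (?w ` {1..s})"
    using g3 g4 x s step by (intro orb_closed_walk) auto
  fix z assume zS: "z \<in> S" and zr: "z \<notin> orb f r"
  have "y \<noteq> r \<and> y \<noteq> x" if "y \<in> orb f z" for y
    using that zr orb_sym[OF fin bf zS] orb_meet[OF fin bf zS rS, of y] x
    by (metis orb_funpow orb_self)
  then show "orb g z = orb f z"
    using g5 orb_subset_bij_betw[OF bf zS] by (intro orb_cong) auto
qed

lemma card_orbits_restrict:
  assumes fin: "finite S'" and bg: "bij_betw g S' S'" and sub: "S \<subseteq> S'"
    and h: "\<forall>z\<in>S. orb g z \<inter> S = orb f z" and T: "T \<subseteq> S"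
  shows "card (orb g ` T) = card (orb f ` T)"
proof -
  have e: "orb f ` T = (\<lambda>Q. Q \<inter> S) ` (orb g ` T)"
    using h T by (auto simp: image_image intro!: image_cong)
  have "inj_on (\<lambda>Q. Q \<inter> S) (orb g ` T)"
  proof (rule inj_onI)
    fix X1 X2 assume "X1 \<in> orb g ` T" "X2 \<in> orb g ` T" "X1 \<inter> S = X2 \<inter> S"
    then obtain z1 z2 where z: "z1 \<in> T" "z2 \<in> T" "X1 = orb g z1" "X2 = orb g z2"
      "orb g z1 \<inter> S = orb g z2 \<inter> S" by auto
    then have "z1 \<in> orb g z2" using T orb_self[of z1 g] by blast
    then show "X1 = X2" using orb_eq[OF fin bg, of z2 z1] z T sub by auto
  qed
  then show ?thesis using e card_image by metis
qed

lemma card_orbits_insert_point: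
  assumes "finite S" "bij_betw f S S" "p \<in> S" "n \<notin> S"
    "g p = n" "g n = f p" "\<forall>z\<in>S-{p}. g z = f z"
  shows "card (orb g ` insert n S) = card (orb f ` S)"
proof -
  note io = orb_insert_point[OF assms]
  have "orb g ` insert n S = orb g ` S" using io(1,2) assms(3) by auto
  moreover have "card (orb g ` S) = card (orb f ` S)"
    using card_orbits_restrict[OF _ bij_betw_insert_point[OF assms(1-3,5-7)], of S f S] assms(1) io(3)
    by auto
  ultimately show ?thesis by simp
qed

lemma card_orbits_add_fixpoint:
  assumes "finite S" "bij_betw f S S" "n \<notin> S" "g n = n" "\<forall>z\<in>S. g z = f z"
  shows "card (orb g ` insert n S) = card (orb f ` S) + 1"
proof -
  note fo = orb_add_fixpoint[OF assms(2,4,5)]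
  have "orb g ` insert n S = insert {n} (orb f ` S)" using fo by auto
  moreover have "{n} \<notin> orb f ` S" using assms(3) orb_self by (metis imageE singletonD)
  ultimately show ?thesis using assms(1) by simp
qed

lemma card_orbits_split_cycle:
  assumes fin: "finite S" and bf: "bij_betw f S S" and rS: "r \<in> S"
    and aS: "a \<notin> S" and bS: "b \<notin> S" and ab: "a \<noteq> b"
    and s: "0 < s" "s < least_power f r" and x: "x = (f ^^ s) r"
    and g1: "g r = b" and g2: "g b = f x" and g3: "g x = a" and g4: "g a = f r"
    and g5: "\<forall>z\<in>S-{r,x}. g z = f z"
    and bg: "bij_betw g (S \<union> {a,b}) (S \<union> {a,b})"
  shows "card (orb g ` (S \<union> {a,b})) = card (orb f ` S) + 1"
proof -
  note so = orb_split_cycle[OF fin bf rS s x g1 g2 g3 g4 g5]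
  have fin': "finite (S \<union> {a,b})" using fin by simp
  have split: "orb f r \<subseteq> orb g a \<union> orb g b"
  proof
    fix z assume "z \<in> orb f r"
    then obtain t where "0 < t" "t \<le> least_power f r" "z = (f ^^ t) r"
      using orb_least_power[OF fin bf rS] by blast
    then show "z \<in> orb g a \<union> orb g b" using so(1,2) by (cases "t \<le> s") auto
  qed
  have old: "orb g z = orb f z" if "z \<in> S" "orb f z \<noteq> orb f r" for z
    using so(3) that orb_eq[OF fin bf rS, of z] by auto
  have eq: "orb g ` (S \<union> {a,b}) = (orb f ` S - {orb f r}) \<union> {orb g a, orb g b}"
  proof (intro equalityI subsetI)
    fix Q assume "Q \<in> orb g ` (S \<union> {a,b})"
    then obtain z where z: "z \<in> S \<union> {a,b}" "Q = orb g z" by auto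
    show "Q \<in> (orb f ` S - {orb f r}) \<union> {orb g a, orb g b}"
    proof (cases "z \<in> S \<and> orb f z \<noteq> orb f r")
      case True
      then show ?thesis using z old by auto
    next
      case False
      then have "z \<in> orb g a \<or> z \<in> orb g b" using z split orb_self[of z f] by auto
      then have "orb g z = orb g a \<or> orb g z = orb g b"
        using orb_eq[OF fin' bg, of a z] orb_eq[OF fin' bg, of b z] by auto
      then show ?thesis using z by auto
    qed
  next
    fix Q assume Q: "Q \<in> (orb f ` S - {orb f r}) \<union> {orb g a, orb g b}"
    show "Q \<in> orb g ` (S \<union> {a,b})"
    proof (cases "Q \<in> {orb g a, orb g b}")
      case False
      then obtain z where "z \<in> S" "Q = orb f z" "orb f z \<noteq> orb f r" using Q by auto
      then show ?thesis using old[of z] by auto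
    qed auto
  qed
  have sub: "orb f z \<subseteq> S" if "z \<in> S" for z using orb_subset_bij_betw[OF bf that] .
  have a_new: "orb g a \<notin> orb f ` S" using sub aS so(2) by auto
  have b_new: "orb g b \<notin> orb f ` S" using sub bS so(1) by auto
  have "b \<notin> orb g a" using so(2) bS ab funpow_in_bij_betw[OF bf rS] by auto
  then have "orb g a \<noteq> orb g b" using orb_self[of b g] by auto
  moreover have fo: "finite (orb f ` S)" using fin by simp
  ultimately have "card ((orb f ` S - {orb f r}) \<union> {orb g a, orb g b})
      = card (orb f ` S - {orb f r}) + 2"
    using a_new b_new by (subst card_Un_disjoint) auto
  moreover have "card (orb f ` S - {orb f r}) + 1 = card (orb f ` S)"
    using rS fo by (metis Suc_eq_plus1 card_Suc_Diff1 imageI)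
  ultimately show ?thesis using eq by simp
qed

lemma bij_betw_involution:
  assumes "\<forall>x\<in>S. a x \<in> S \<and> a (a x) = x"
  shows "bij_betw a S S"
proof -
  have "inj_on a S" using assms by (metis inj_onI)
  moreover have "a ` S = S" using assms by (auto simp: image_iff) metis
  ultimately show ?thesis by (simp add: bij_betw_def)
qed

lemma card_orbits_insert_disjoint:
  assumes "finite X" "orb g n \<inter> X = {}"
  shows "card (orb g ` insert n X) = card (orb g ` X) + 1"
proof -
  have "orb g n \<notin> orb g ` X" using assms(2) orb_self by blast
  then show ?thesis using assms(1) by simp
qed

section \<open>Connectivity\<close>

definition adj :: "dmap \<Rightarrow> (nat \<times> nat) set" where
  "adj M = {(d, alpha M d) | d. d \<in> darts M} \<union> {(d, sigma M d) | d. d \<in> darts M}"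

lemma connected_map_adj: "connected_map M \<longleftrightarrow> (\<forall>x\<in>darts M. \<forall>y\<in>darts M. (x, y) \<in> (adj M)\<^sup>*)"
  unfolding connected_map_def adj_def by simp

lemma adj_rtrancl_closed:
  assumes "\<forall>x\<in>T. alpha M x \<in> T \<and> sigma M x \<in> T" "u \<in> T" "(u, v) \<in> (adj M)\<^sup>*"
  shows "v \<in> T"
  using assms(3,2)
proof (induction rule: rtrancl_induct)
  case (step y z)
  then show ?case using assms(1) unfolding adj_def by auto
qed simp

lemma adj_rtrancl_orb:
  assumes "bij_betw (sigma M) (darts M) (darts M)" "u \<in> darts M" "v \<in> orb (sigma M) u"
  shows "(u, v) \<in> (adj M)\<^sup>*"
proof -
  obtain j where v: "v = (sigma M ^^ j) u" using assms(3) by (auto simp: orb_def)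
  have "(u, (sigma M ^^ j) u) \<in> (adj M)\<^sup>*" for j
  proof (induction j)
    case (Suc j)
    have "(sigma M ^^ j) u \<in> darts M" using funpow_in_bij_betw[OF assms(1,2)] .
    then have "((sigma M ^^ j) u, (sigma M ^^ Suc j) u) \<in> adj M" unfolding adj_def by auto
    then show ?case using Suc rtrancl_into_rtrancl by metis
  qed simp
  then show ?thesis using v by simp
qed

lemma adj_rtrancl_sym:
  assumes al: "\<forall>x\<in>darts M. alpha M x \<in> darts M \<and> alpha M (alpha M x) = x"
    and fin: "finite (darts M)" and bs: "bij_betw (sigma M) (darts M) (darts M)"
    and uv: "(u, v) \<in> (adj M)\<^sup>*" and u: "u \<in> darts M"
  shows "(v, u) \<in> (adj M)\<^sup>*"
  using uv u
proof (induction rule: rtrancl_induct)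
  case (step y z)
  have yD: "y \<in> darts M"
    using adj_rtrancl_closed[OF _ step(4,1)] al bij_betw_apply[OF bs] by blast
  have "(z, y) \<in> (adj M)\<^sup>*"
  proof (cases "z = alpha M y")
    case True
    then have "(z, alpha M z) \<in> adj M" using al yD unfolding adj_def by auto
    then show ?thesis using True al yD by auto
  next
    case False
    then have zy: "z = sigma M y" using step(2) unfolding adj_def by auto
    then have zD: "z \<in> darts M" using yD bs bij_betw_apply by metis
    have "z \<in> orb (sigma M) y" using zy by simp
    then have "y \<in> orb (sigma M) z" using orb_sym[OF fin bs yD] by simp
    then show ?thesis using adj_rtrancl_orb[OF bs zD] by simp
  qed
  then show ?case using step by (meson rtrancl_trans)
qed simp

lemma connected_mapI_root:
  assumes al: "\<forall>x\<in>darts M. alpha M x \<in> darts M \<and> alpha M (alpha M x) = x"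
    and fin: "finite (darts M)" and bs: "bij_betw (sigma M) (darts M) (darts M)"
    and r: "r \<in> darts M" and reach: "\<forall>y\<in>darts M. (r, y) \<in> (adj M)\<^sup>*"
  shows "connected_map M"
  unfolding connected_map_adj
proof (intro ballI)
  fix x y assume "x \<in> darts M" "y \<in> darts M"
  then have "(x, r) \<in> (adj M)\<^sup>*" "(r, y) \<in> (adj M)\<^sup>*"
    using adj_rtrancl_sym[OF al fin bs, of r x] reach r by auto
  then show "(x, y) \<in> (adj M)\<^sup>*" by (meson rtrancl_trans)
qed

section \<open>Deleting the root edge\<close>

lemma darts_Pi: "darts (Pi U) = darts U - {root U, alpha U (root U)}"
  and alpha_Pi: "alpha (Pi U) = alpha U"
  and sigma_Pi: "sigma (Pi U) = skip_next U"
  and root_Pi: "root (Pi U) = (if darts (Pi U) = {} then 0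
     else THE d. d \<in> darts (Pi U) \<and> skip_next U d = skip_next U (alpha U (root U)))"
  by (simp_all add: Defs.Pi_def Let_def)

lemma skip_next_eq1:
  assumes "sigma U z \<notin> {root U, alpha U (root U)}"
  shows "skip_next U z = sigma U z"
proof -
  have "(LEAST j. 0 < j \<and> (sigma U ^^ j) z \<notin> {root U, alpha U (root U)}) = 1"
    using assms by (intro Least_equality) auto
  then show ?thesis unfolding skip_next_def Let_def by simp
qed

lemma skip_next_eq2:
  assumes "sigma U z \<in> {root U, alpha U (root U)}" "sigma U (sigma U z) \<notin> {root U, alpha U (root U)}"
  shows "skip_next U z = sigma U (sigma U z)"
proof -
  have "(LEAST j. 0 < j \<and> (sigma U ^^ j) z \<notin> {root U, alpha U (root U)}) = 2"
  proof (rule Least_equality)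
    show "0 < (2::nat) \<and> (sigma U ^^ 2) z \<notin> {root U, alpha U (root U)}"
      using assms(2) by (simp add: numeral_2_eq_2)
    fix y assume y: "0 < y \<and> (sigma U ^^ y) z \<notin> {root U, alpha U (root U)}"
    show "2 \<le> y"
    proof (rule ccontr)
      assume "\<not> 2 \<le> y" then have "y = 1" using y by auto
      then show False using y assms(1) by simp
    qed
  qed
  then show ?thesis unfolding skip_next_def Let_def by (simp add: numeral_2_eq_2)
qed

lemma skip_next_eq3:
  assumes "sigma U z \<in> {root U, alpha U (root U)}" "sigma U (sigma U z) \<in> {root U, alpha U (root U)}"
    "sigma U (sigma U (sigma U z)) \<notin> {root U, alpha U (root U)}"
  shows "skip_next U z = sigma U (sigma U (sigma U z))"
proof -
  have "(LEAST j. 0 < j \<and> (sigma U ^^ j) z \<notin> {root U, alpha U (root U)}) = 3"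
  proof (rule Least_equality)
    show "0 < (3::nat) \<and> (sigma U ^^ 3) z \<notin> {root U, alpha U (root U)}"
      using assms(3) by (simp add: numeral_3_eq_3)
    fix y assume y: "0 < y \<and> (sigma U ^^ y) z \<notin> {root U, alpha U (root U)}"
    show "3 \<le> y"
    proof (rule ccontr)
      assume "\<not> 3 \<le> y" then have "y = 1 \<or> y = 2" using y by auto
      then show False using y assms(1,2) by (auto simp: numeral_2_eq_2)
    qed
  qed
  then show ?thesis unfolding skip_next_def Let_def by (simp add: numeral_3_eq_3)
qed

section \<open>Invariance under isomorphism\<close>

lemma image_orb_conj:
  assumes "\<forall>x\<in>S. f1 x \<in> S" "\<forall>x\<in>S. g (f1 x) = f2 (g x)" "x \<in> S"
  shows "g ` orb f1 x = orb f2 (g x)"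
proof -
  have "(f1 ^^ j) x \<in> S \<and> g ((f1 ^^ j) x) = (f2 ^^ j) (g x)" for j
    by (induction j) (use assms in auto)
  then show ?thesis unfolding orb_def by (auto simp: image_iff) metis
qed

lemma map_iso_image_orbs:
  assumes c: "\<forall>x\<in>darts A. g (alpha A x) = alpha B (g x) \<and> g (sigma A x) = sigma B (g x)"
    and al: "\<forall>x\<in>darts A. alpha A x \<in> darts A" and bs: "bij_betw (sigma A) (darts A) (darts A)"
    and x: "x \<in> darts A"
  shows "g ` orb (sigma A) x = orb (sigma B) (g x)" "g ` orb (phi A) x = orb (phi B) (g x)"
    "orb (sigma A) x \<subseteq> darts A" "orb (phi A) x \<subseteq> darts A"
proof -
  have sA: "\<forall>z\<in>darts A. sigma A z \<in> darts A" using bs bij_betw_apply by metis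
  show "g ` orb (sigma A) x = orb (sigma B) (g x)" using image_orb_conj[OF sA _ x] c by auto
  have pA: "\<forall>z\<in>darts A. phi A z \<in> darts A" using sA al by (simp add: phi_def)
  have "\<forall>z\<in>darts A. g (phi A z) = phi B (g z)" using c sA by (simp add: phi_def)
  then show "g ` orb (phi A) x = orb (phi B) (g x)" using image_orb_conj[OF pA _ x] by auto
  show "orb (sigma A) x \<subseteq> darts A" using orb_subsetI[of x "darts A" "sigma A"] x sA by blast
  show "orb (phi A) x \<subseteq> darts A" using orb_subsetI[of x "darts A" "phi A"] x pA by blast
qed

lemma map_iso_outv:
  assumes iso: "map_iso A B" and r: "rooted_planar_map A" and ne: "darts A \<noteq> {}"
  shows "outv A = outv B"
proof -
  obtain g where g: "bij_betw g (darts A) (darts B)"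
    and c: "\<forall>x\<in>darts A. g (alpha A x) = alpha B (g x) \<and> g (sigma A x) = sigma B (g x)"
    and gr: "g (root A) = root B" using iso ne unfolding map_iso_def by auto
  have al: "\<forall>x\<in>darts A. alpha A x \<in> darts A" and bs: "bij_betw (sigma A) (darts A) (darts A)"
    and rA: "root A \<in> darts A" using r ne unfolding rooted_planar_map_def by auto
  have "g ` darts A = darts B" using g by (simp add: bij_betw_def)
  then have neB: "darts B \<noteq> {}" using ne by auto
  note io = map_iso_image_orbs[OF c al bs]
  have OA: "outer_face A \<subseteq> darts A" using io(4)[OF rA] by (simp add: outer_face_def)
  have OB: "outer_face B = g ` outer_face A" using io(2)[OF rA] gr by (simp add: outer_face_def)
  have "orb (sigma B) ` outer_face B = (image g) ` (orb (sigma A) ` outer_face A)"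
  proof -
    have "orb (sigma B) ` outer_face B = (\<lambda>z. orb (sigma B) (g z)) ` outer_face A"
      using OB by (simp add: image_image)
    also have "\<dots> = (\<lambda>z. g ` orb (sigma A) z) ` outer_face A"
      using OA io(1) by (intro image_cong) auto
    finally show ?thesis by (simp add: image_image)
  qed
  moreover have "inj_on (image g) (orb (sigma A) ` outer_face A)"
  proof (rule inj_on_image)
    have "\<Union> (orb (sigma A) ` outer_face A) \<subseteq> darts A" using io(3) OA by blast
    moreover have "inj_on g (darts A)" using g by (simp add: bij_betw_def)
    ultimately show "inj_on g (\<Union> (orb (sigma A) ` outer_face A))" using inj_on_subset by metis
  qed
  ultimately have "card (orb (sigma B) ` outer_face B) = card (orb (sigma A) ` outer_face A)"
    by (simp add: card_image)
  then show ?thesis using ne neB by (simp add: outv_def)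
qed

lemma map_iso_one_corner_root:
  assumes iso: "map_iso A B" and r: "rooted_planar_map A" and ne: "darts A \<noteq> {}"
    and oc: "orb (sigma A) (root A) \<inter> orb (phi A) (root A) = {root A}"
  shows "orb (sigma B) (root B) \<inter> orb (phi B) (root B) = {root B}"
proof -
  obtain g where g: "bij_betw g (darts A) (darts B)"
    and c: "\<forall>x\<in>darts A. g (alpha A x) = alpha B (g x) \<and> g (sigma A x) = sigma B (g x)"
    and gr: "g (root A) = root B" using iso ne unfolding map_iso_def by auto
  have al: "\<forall>x\<in>darts A. alpha A x \<in> darts A" and bs: "bij_betw (sigma A) (darts A) (darts A)"
    and rA: "root A \<in> darts A" using r ne unfolding rooted_planar_map_def by auto
  note io = map_iso_image_orbs[OF c al bs rA]
  have "g ` (orb (sigma A) (root A) \<inter> orb (phi A) (root A)) = g ` orb (sigma A) (root A) \<inter> g ` orb (phi A) (root A)"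
  proof -
    have "inj_on g (darts A)" using g by (simp add: bij_betw_def)
    from inj_on_image_Int[OF this io(3) io(4)] show ?thesis .
  qed
  then show ?thesis using io(1,2) oc gr by simp
qed

section \<open>Adding a root edge\<close>

definition insert_after :: "(nat \<Rightarrow> nat) \<Rightarrow> nat \<Rightarrow> nat \<Rightarrow> nat \<Rightarrow> nat" where
  "insert_after f p n = (\<lambda>z. if z = p then n else if z = n then f p else f z)"

definition fresh :: "nat set \<Rightarrow> nat" where
  "fresh D = Suc (Max (insert 0 D))"

lemma fresh_notin: "finite D \<Longrightarrow> fresh D \<notin> D" "finite D \<Longrightarrow> Suc (fresh D) \<notin> D"
proof -
  assume f: "finite D"
  have "x \<le> Max (insert 0 D)" if "x \<in> D" for x using f that by simp
  then show "fresh D \<notin> D" "Suc (fresh D) \<notin> D" unfolding fresh_def by fastforce+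
qed

text \<open>The candidate preimages of \<open>M\<close> under \<open>Pi\<close>: a new root edge \<open>{a, b}\<close> (the darts
  \<open>new_end\<close> and \<open>new_root\<close> of the locale below) is added, with
  \<open>a\<close> inserted right after the root of \<open>M\<close> in its rotation, so that deleting the edge
  re-roots at the old root.  The new root \<open>b\<close> becomes a new leaf (\<open>y = None\<close>) or is
  inserted right after the dart \<open>x\<close> (\<open>y = Some x\<close>).\<close>

definition add_root_edge :: "dmap \<Rightarrow> nat option \<Rightarrow> dmap" where
  "add_root_edge M y =
     (let a = fresh (darts M); b = Suc a; s = insert_after (sigma M) (root M) a
      in \<lparr> darts = insert b (insert a (darts M)),
           alpha = (alpha M)(a := b, b := a),
           sigma = (case y of None \<Rightarrow> s(b := b) | Some x \<Rightarrow> insert_after s x b),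
           root = b \<rparr>)"

locale nonempty_planar_map =
  fixes M :: dmap
  assumes rpm: "rooted_planar_map M" and ne: "darts M \<noteq> {}"
begin

abbreviation "D \<equiv> darts M"
abbreviation "al \<equiv> alpha M"
abbreviation "sg \<equiv> sigma M"
abbreviation "rho \<equiv> root M"
abbreviation "ph \<equiv> phi M"
abbreviation "ext y \<equiv> add_root_edge M y"

definition new_end :: nat where "new_end = fresh D"
definition new_root :: nat where "new_root = Suc new_end"
definition sigma_end :: "nat \<Rightarrow> nat" where "sigma_end = insert_after sg rho new_end"
definition phi_end :: "nat \<Rightarrow> nat" where "phi_end = insert_after ph rho new_end"
definition D_ext :: "nat set" where "D_ext = insert new_root (insert new_end D)"
definition alpha_ext :: "nat \<Rightarrow> nat" where "alpha_ext = al(new_end := new_root, new_root := new_end)"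
definition choices :: "nat option set" where "choices = insert None (Some ` insert new_end D)"

lemma finite_D: "finite D" using rpm unfolding rooted_planar_map_def by auto
lemma alpha_inv: "\<forall>x\<in>D. al x \<in> D \<and> al x \<noteq> x \<and> al (al x) = x"
  using rpm unfolding rooted_planar_map_def by auto
lemma bij_sg: "bij_betw sg D D" using rpm unfolding rooted_planar_map_def by auto
lemma rho_in_D: "rho \<in> D" using rpm ne unfolding rooted_planar_map_def by auto
lemma connected_M: "connected_map M" using rpm unfolding rooted_planar_map_def by auto
lemma sg_in_D: "z \<in> D \<Longrightarrow> sg z \<in> D" using bij_sg bij_betw_apply by metis
lemma phi_eq: "ph z = al (sg z)" by (simp add: phi_def)
lemma bij_ph: "bij_betw ph D D"
  using bij_betw_trans[OF bij_sg bij_betw_involution] alpha_inv by (simp add: phi_def)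

lemma new_end_notin: "new_end \<notin> D" using fresh_notin finite_D new_end_def by auto
lemma new_root_notin: "new_root \<notin> insert new_end D"
  using fresh_notin finite_D new_end_def new_root_def by auto
lemma new_notin: "z \<in> D \<Longrightarrow> z \<notin> {new_root, new_end}"
  using new_end_notin new_root_notin by auto
lemma finite_D_ext: "finite D_ext" using finite_D by (simp add: D_ext_def)

lemma sigma_end_rho: "sigma_end rho = new_end" by (simp add: sigma_end_def insert_after_def)
lemma sigma_end_new_end: "sigma_end new_end = sg rho"
  using new_end_notin rho_in_D by (auto simp: sigma_end_def insert_after_def)
lemma sigma_end_eq: "\<forall>z\<in>D-{rho}. sigma_end z = sg z"
  using new_end_notin by (auto simp: sigma_end_def insert_after_def)
lemmas sigma_end_props = finite_D bij_sg rho_in_D new_end_notin sigma_end_rho sigma_end_new_end sigma_end_eq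
lemma bij_sigma_end: "bij_betw sigma_end (insert new_end D) (insert new_end D)"
  using bij_betw_insert_point[OF finite_D bij_sg rho_in_D sigma_end_rho sigma_end_new_end sigma_end_eq] .

lemma phi_end_rho: "phi_end rho = new_end" by (simp add: phi_end_def insert_after_def)
lemma phi_end_new_end: "phi_end new_end = ph rho"
  using new_end_notin rho_in_D by (auto simp: phi_end_def insert_after_def)
lemma phi_end_eq: "\<forall>z\<in>D-{rho}. phi_end z = ph z"
  using new_end_notin by (auto simp: phi_end_def insert_after_def)
lemmas phi_end_props = finite_D bij_ph rho_in_D new_end_notin phi_end_rho phi_end_new_end phi_end_eq
lemma bij_phi_end: "bij_betw phi_end (insert new_end D) (insert new_end D)"
  using bij_betw_insert_point[OF finite_D bij_ph rho_in_D phi_end_rho phi_end_new_end phi_end_eq] .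

lemma darts_ext: "darts (ext y) = D_ext"
  by (simp add: add_root_edge_def Let_def D_ext_def new_end_def new_root_def)
lemma alpha_ext_eq: "alpha (ext y) = alpha_ext"
  by (simp add: add_root_edge_def Let_def alpha_ext_def new_end_def new_root_def)
lemma root_ext: "root (ext y) = new_root"
  by (simp add: add_root_edge_def Let_def new_end_def new_root_def)
lemma sigma_ext_None: "sigma (ext None) = sigma_end(new_root := new_root)"
  by (simp add: add_root_edge_def Let_def sigma_end_def new_end_def new_root_def)
lemma sigma_ext_Some: "sigma (ext (Some x)) = insert_after sigma_end x new_root"
  by (simp add: add_root_edge_def Let_def sigma_end_def new_end_def new_root_def)

lemma alpha_ext_new_end: "alpha_ext new_end = new_root" by (simp add: alpha_ext_def)
lemma alpha_ext_new_root: "alpha_ext new_root = new_end"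
  using new_root_notin by (simp add: alpha_ext_def)
lemma alpha_ext_D: "z \<in> D \<Longrightarrow> alpha_ext z = al z"
  using new_notin by (auto simp: alpha_ext_def)
lemma alpha_ext_inv: "\<forall>x\<in>D_ext. alpha_ext x \<in> D_ext \<and> alpha_ext x \<noteq> x \<and> alpha_ext (alpha_ext x) = x"
  using alpha_inv new_end_notin new_root_notin by (auto simp: D_ext_def alpha_ext_def)
lemma phi_ext: "phi (ext y) z = alpha_ext (sigma (ext y) z)"
  by (simp add: phi_def alpha_ext_eq)

lemma sigma_ext_facts:
  assumes "y \<in> choices"
  shows "bij_betw (sigma (ext y)) D_ext D_ext" "\<forall>z\<in>D. orb (sigma (ext y)) z \<inter> D = orb sg z"
proof -
  have fin: "finite (insert new_end D)" using finite_D by simp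
  have orb_end: "orb sigma_end z \<inter> D = orb sg z" if "z \<in> D" for z
    using orb_insert_point(3)[OF sigma_end_props that] .
  have "bij_betw (sigma (ext y)) D_ext D_ext \<and> (\<forall>z\<in>D. orb (sigma (ext y)) z \<inter> D = orb sg z)"
  proof (cases y)
    case None
    let ?g = "sigma_end(new_root := new_root)"
    have g: "?g new_root = new_root" "\<forall>z\<in>insert new_end D. ?g z = sigma_end z"
      using new_root_notin by auto
    note fp = bij_sigma_end new_root_notin g
    have "orb ?g z \<inter> D = orb sg z" if "z \<in> D" for z
      using orb_add_fixpoint(2)[where g = ?g, OF bij_sigma_end g, of z] orb_end that by simp
    then show ?thesis using None sigma_ext_None bij_betw_add_fixpoint[where g = ?g, OF fp] by (simp add: D_ext_def)
  next
    case (Some x)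
    then have x: "x \<in> insert new_end D" using assms by (auto simp: choices_def)
    let ?g = "insert_after sigma_end x new_root"
    have g: "?g x = new_root" "?g new_root = sigma_end x" "\<forall>z\<in>insert new_end D-{x}. ?g z = sigma_end z"
      using x new_root_notin by (auto simp: insert_after_def)
    note ins = fin bij_sigma_end x new_root_notin g
    have "orb ?g z \<inter> D = orb sg z" if "z \<in> D" for z
      using orb_insert_point(3)[OF ins, of z] orb_end that by blast
    then show ?thesis using Some sigma_ext_Some bij_betw_insert_point[OF fin bij_sigma_end x g] by (simp add: D_ext_def)
  qed
  then show "bij_betw (sigma (ext y)) D_ext D_ext" "\<forall>z\<in>D. orb (sigma (ext y)) z \<inter> D = orb sg z"
    by auto
qed

lemma bij_phi_ext: "y \<in> choices \<Longrightarrow> bij_betw (phi (ext y)) D_ext D_ext"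
  using bij_betw_trans[OF sigma_ext_facts(1) bij_betw_involution] alpha_ext_inv
  by (simp add: phi_def alpha_ext_eq)

lemma card_orbits_sigma_ext:
  assumes "y \<in> choices" "T \<subseteq> D"
  shows "card (orb (sigma (ext y)) ` T) = card (orb sg ` T)"
  using card_orbits_restrict[OF finite_D_ext sigma_ext_facts(1)[OF assms(1)], of D sg T]
    sigma_ext_facts(2)[OF assms(1)] assms(2)
  by (auto simp: D_ext_def)

lemma sigma_ext_rho: "y \<in> choices \<Longrightarrow> sigma (ext y) rho \<in> {new_end, new_root}"
  using rho_in_D new_notin
  by (cases y) (auto simp: sigma_ext_None sigma_ext_Some insert_after_def sigma_end_rho)

lemma connected_ext:
  assumes "y \<in> choices"
  shows "connected_map (ext y)"
proof -
  note sf = sigma_ext_facts[OF assms]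
  have al: "\<forall>x\<in>darts (ext y). alpha (ext y) x \<in> darts (ext y) \<and> alpha (ext y) (alpha (ext y) x) = x"
    using alpha_ext_inv by (simp add: darts_ext alpha_ext_eq)
  have bs: "bij_betw (sigma (ext y)) (darts (ext y)) (darts (ext y))" using sf(1) by (simp add: darts_ext)
  have rho: "rho \<in> darts (ext y)" using rho_in_D by (simp add: darts_ext D_ext_def)
  have reach_D: "(rho, w) \<in> (adj (ext y))\<^sup>*" if "w \<in> D" for w
  proof -
    have "(rho, w) \<in> (adj M)\<^sup>*" using connected_M rho_in_D that unfolding connected_map_adj by auto
    then show ?thesis
    proof (induction rule: rtrancl_induct)
      case (step u v)
      have uD: "u \<in> D" using step(2) unfolding adj_def by auto
      have "(u, v) \<in> (adj (ext y))\<^sup>*"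
      proof (cases "v = al u")
        case True
        then have "(u, v) \<in> adj (ext y)" using uD alpha_ext_D[OF uD] unfolding adj_def
          by (auto simp: darts_ext alpha_ext_eq D_ext_def)
        then show ?thesis by auto
      next
        case False
        then have "v = sg u" using step(2) unfolding adj_def by auto
        then have "v \<in> orb (sigma (ext y)) u" using sf(2) uD orb_apply_self[of sg u] by blast
        moreover have "u \<in> darts (ext y)" using uD by (simp add: darts_ext D_ext_def)
        ultimately show ?thesis using adj_rtrancl_orb[OF bs] by blast
      qed
      then show ?case using step(3) by (meson rtrancl_trans)
    qed simp
  qed
  have "(rho, sigma (ext y) rho) \<in> adj (ext y)"
    "(sigma (ext y) rho, alpha (ext y) (sigma (ext y) rho)) \<in> adj (ext y)"
    using rho sigma_ext_rho[OF assms] unfolding adj_def by (auto simp: darts_ext D_ext_def)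
  then have "(rho, new_end) \<in> (adj (ext y))\<^sup>*" "(rho, new_root) \<in> (adj (ext y))\<^sup>*"
    using sigma_ext_rho[OF assms] alpha_ext_new_end alpha_ext_new_root by (auto simp: alpha_ext_eq)
  then have "\<forall>w\<in>darts (ext y). (rho, w) \<in> (adj (ext y))\<^sup>*"
    using reach_D by (auto simp: darts_ext D_ext_def)
  then show ?thesis using connected_mapI_root[OF al _ bs rho] finite_D_ext by (simp add: darts_ext)
qed

lemma rooted_planar_map_extI:
  assumes y: "y \<in> choices"
    and count: "card (orb (sigma (ext y)) ` D_ext) + card (orb (phi (ext y)) ` D_ext)
      = card (orb sg ` D) + card (orb ph ` D) + 1"
  shows "rooted_planar_map (ext y)"
proof -
  have "card (orb sg ` D) + card (orb ph ` D) = card D div 2 + 2"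
    using rpm ne by (simp add: rooted_planar_map_def nvertices_def nfaces_def nedges_def phi_def)
  moreover have "card D_ext = card D + 2"
    using finite_D new_end_notin new_root_notin by (simp add: D_ext_def)
  ultimately have "nvertices (ext y) + nfaces (ext y) = nedges (ext y) + 2"
    using count by (simp add: nvertices_def nfaces_def nedges_def darts_ext D_ext_def)
  then show ?thesis
    using alpha_ext_inv finite_D_ext sigma_ext_facts(1)[OF y] connected_ext[OF y]
    unfolding rooted_planar_map_def
    by (simp add: darts_ext root_ext D_ext_def alpha_ext_eq alpha_ext_new_end alpha_ext_new_root)
qed

lemma nedges_ext: "nedges (ext y) = nedges M + 1"
  using finite_D new_end_notin new_root_notin by (simp add: nedges_def darts_ext D_ext_def)

lemma outv_ext: "outv (ext y) = card (orb (sigma (ext y)) ` orb (phi (ext y)) new_root)"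
  by (simp add: outv_def outer_face_def darts_ext root_ext D_ext_def)

lemma one_corner_extI:
  assumes "rooted_planar_map (ext y)"
    "orb (sigma (ext y)) new_root \<inter> orb (phi (ext y)) new_root = {new_root}"
  shows "one_corner (ext y)"
  using assms by (simp add: one_corner_def outer_face_def root_ext)

end

context nonempty_planar_map
begin

lemma new_darts_distinct: "new_root \<noteq> new_end" "new_root \<noteq> rho" "new_end \<noteq> rho"
  using new_root_notin new_end_notin rho_in_D by auto

lemmas sigma_ext_simps = sigma_ext_None sigma_ext_Some insert_after_def sigma_end_def
  new_darts_distinct new_darts_distinct[symmetric]

lemma sigma_ext_None_at:
  "sigma (ext None) rho = new_end" "sigma (ext None) new_end = sg rho"
  "sigma (ext None) new_root = new_root" "\<forall>z\<in>D-{rho}. sigma (ext None) z = sg z"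
  using new_notin by (auto simp: sigma_ext_simps)

lemma sigma_ext_rho_at:
  "sigma (ext (Some rho)) rho = new_root" "sigma (ext (Some rho)) new_root = new_end"
  "sigma (ext (Some rho)) new_end = sg rho" "\<forall>z\<in>D-{rho}. sigma (ext (Some rho)) z = sg z"
  using new_notin by (auto simp: sigma_ext_simps)

lemma sigma_ext_new_end_at:
  "sigma (ext (Some new_end)) rho = new_end" "sigma (ext (Some new_end)) new_end = new_root"
  "sigma (ext (Some new_end)) new_root = sg rho" "\<forall>z\<in>D-{rho}. sigma (ext (Some new_end)) z = sg z"
  using new_notin by (auto simp: sigma_ext_simps)

lemma sigma_ext_at:
  assumes "x \<in> D" "x \<noteq> rho"
  shows "sigma (ext (Some x)) x = new_root" "sigma (ext (Some x)) new_root = sg x"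
    "sigma (ext (Some x)) rho = new_end" "sigma (ext (Some x)) new_end = sg rho"
    "\<forall>z\<in>D-{rho,x}. sigma (ext (Some x)) z = sg z"
  using assms new_notin by (auto simp: sigma_ext_simps)

lemma skip_next_ext1:
  "sigma (ext y) z \<notin> {new_root, new_end} \<Longrightarrow> skip_next (ext y) z = sigma (ext y) z"
  using skip_next_eq1[of "ext y" z] by (simp add: root_ext alpha_ext_eq alpha_ext_new_root)

lemma skip_next_ext2:
  "sigma (ext y) z \<in> {new_root, new_end} \<Longrightarrow> sigma (ext y) (sigma (ext y) z) \<notin> {new_root, new_end} \<Longrightarrow>
   skip_next (ext y) z = sigma (ext y) (sigma (ext y) z)"
  using skip_next_eq2[of "ext y" z] by (simp add: root_ext alpha_ext_eq alpha_ext_new_root)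

lemma skip_next_ext3:
  "sigma (ext y) z \<in> {new_root, new_end} \<Longrightarrow> sigma (ext y) (sigma (ext y) z) \<in> {new_root, new_end} \<Longrightarrow>
   sigma (ext y) (sigma (ext y) (sigma (ext y) z)) \<notin> {new_root, new_end} \<Longrightarrow>
   skip_next (ext y) z = sigma (ext y) (sigma (ext y) (sigma (ext y) z))"
  using skip_next_eq3[of "ext y" z] by (simp add: root_ext alpha_ext_eq alpha_ext_new_root)

lemma skip_next_ext:
  assumes "y \<in> choices"
  shows "\<forall>z\<in>D. skip_next (ext y) z = sg z" "skip_next (ext y) new_end = sg rho"
proof -
  have sg_rho: "sg rho \<notin> {new_root, new_end}" using new_notin[OF sg_in_D[OF rho_in_D]] .
  have other: "skip_next (ext y) z = sg z" if "z \<in> D" "sigma (ext y) z = sg z" for z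
    using skip_next_ext1[of y z] that new_notin[OF sg_in_D] by simp
  consider "y = None" | "y = Some rho" | "y = Some new_end" | x where "y = Some x" "x \<in> D" "x \<noteq> rho"
    using assms by (auto simp: choices_def)
  then have "(\<forall>z\<in>D. skip_next (ext y) z = sg z) \<and> skip_next (ext y) new_end = sg rho"
  proof cases
    case 1
    note s = sigma_ext_None_at
    have "skip_next (ext y) rho = sg rho" using skip_next_ext2[of y rho] s sg_rho 1 by simp
    then show ?thesis using other s 1 skip_next_ext1[of y new_end] sg_rho by auto
  next
    case 2
    note s = sigma_ext_rho_at
    have "skip_next (ext y) rho = sg rho" using skip_next_ext3[of y rho] s sg_rho 2 by simp
    then show ?thesis using other s 2 skip_next_ext1[of y new_end] sg_rho by auto
  next
    case 3
    note s = sigma_ext_new_end_at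
    have "skip_next (ext y) rho = sg rho" using skip_next_ext3[of y rho] s sg_rho 3 by simp
    moreover have "skip_next (ext y) new_end = sg rho" using skip_next_ext2[of y new_end] s sg_rho 3 by simp
    ultimately show ?thesis using other s 3 by auto
  next
    case (4 x)
    note s = sigma_ext_at[OF 4(2,3)]
    have "skip_next (ext y) rho = sg rho" using skip_next_ext2[of y rho] s sg_rho 4 by simp
    moreover have "skip_next (ext y) x = sg x"
      using skip_next_ext2[of y x] s new_notin[OF sg_in_D[OF 4(2)]] 4 by simp
    ultimately show ?thesis using other s 4 skip_next_ext1[of y new_end] sg_rho by auto
  qed
  then show "\<forall>z\<in>D. skip_next (ext y) z = sg z" "skip_next (ext y) new_end = sg rho" by auto
qed

theorem Pi_ext_iso:
  assumes "y \<in> choices"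
  shows "map_iso (Pi (ext y)) M"
proof -
  note sk = skip_next_ext[OF assms]
  have darts: "darts (Pi (ext y)) = D"
    using new_notin new_root_notin
    by (auto simp: darts_Pi darts_ext alpha_ext_eq root_ext alpha_ext_new_root D_ext_def)
  moreover have "alpha (Pi (ext y)) = alpha_ext" "sigma (Pi (ext y)) = skip_next (ext y)"
    by (simp_all add: alpha_Pi sigma_Pi alpha_ext_eq)
  moreover have "(THE d. d \<in> D \<and> skip_next (ext y) d = skip_next (ext y) new_end) = rho"
  proof (rule the_equality)
    fix d assume "d \<in> D \<and> skip_next (ext y) d = skip_next (ext y) new_end"
    then show "d = rho" using sk bij_sg rho_in_D by (metis bij_betw_def inj_onD)
  qed (use rho_in_D sk in auto)
  then have "root (Pi (ext y)) = rho"
    using ne by (subst root_Pi) (simp add: darts alpha_ext_eq root_ext alpha_ext_new_root)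
  ultimately show ?thesis unfolding map_iso_def
    by (intro exI[of _ id]) (use sk alpha_ext_D in auto)
qed

end

section \<open>The walk around the outer face\<close>

context nonempty_planar_map
begin

abbreviation "outer \<equiv> outer_face M"

text \<open>Walking around the outer face from the root corner, the corner \<open>x\<close> is reached after
  \<open>pos x\<close> steps and the root corner again after \<open>face_len\<close> steps; \<open>tail x\<close> is the part
  of the walk after \<open>x\<close>.  The corner \<open>x\<close> is a last visit if the walk does not come back
  to the vertex of \<open>x\<close> during its tail.\<close>

definition face_len :: nat where "face_len = least_power ph rho"
definition pos :: "nat \<Rightarrow> nat" where "pos x = (LEAST t. 0 < t \<and> (ph ^^ t) rho = x)"
definition tail :: "nat \<Rightarrow> nat set" where "tail x = (\<lambda>t. (ph ^^ t) rho) ` {Suc (pos x)..face_len}"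
definition last_visits :: "nat set" where "last_visits = {x \<in> outer. tail x \<inter> orb sg x = {}}"

lemma outv_eq: "outv M = card (orb sg ` outer)"
  using ne by (simp add: outv_def)

lemma outer_sub_D: "outer \<subseteq> D"
  using orb_subset_bij_betw[OF bij_ph rho_in_D] by (simp add: outer_face_def)

lemma rho_outer: "rho \<in> outer"
  by (simp add: outer_face_def)

lemma finite_outer: "finite outer"
  using finite_D outer_sub_D finite_subset by blast

lemma face_len_props:
  "0 < face_len" "(ph ^^ face_len) rho = rho" "\<And>t. 0 < t \<Longrightarrow> t < face_len \<Longrightarrow> (ph ^^ t) rho \<noteq> rho"
  using least_power_bij_betw[OF finite_D bij_ph rho_in_D] unfolding face_len_def by auto

lemma pos_props:
  assumes "x \<in> outer"
  shows "0 < pos x" "pos x \<le> face_len" "(ph ^^ pos x) rho = x"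
proof -
  obtain t where t: "0 < t" "t \<le> face_len" "x = (ph ^^ t) rho"
    using orb_least_power[OF finite_D bij_ph rho_in_D] assms
    unfolding outer_face_def face_len_def by blast
  have "0 < pos x \<and> (ph ^^ pos x) rho = x"
    unfolding pos_def by (rule LeastI[of _ t]) (use t in auto)
  then show "0 < pos x" "(ph ^^ pos x) rho = x" by auto
  have "pos x \<le> t" unfolding pos_def by (rule Least_le) (use t in auto)
  then show "pos x \<le> face_len" using t by simp
qed

lemma pos_funpow:
  assumes "0 < t" "t \<le> face_len"
  shows "pos ((ph ^^ t) rho) = t"
  unfolding pos_def
proof (rule Least_equality)
  fix t' assume t': "0 < t' \<and> (ph ^^ t') rho = (ph ^^ t) rho"
  show "t \<le> t'"
  proof (rule ccontr)
    assume "\<not> t \<le> t'"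
    then have "t' < t" "t - t' < least_power ph rho" using t' assms unfolding face_len_def by auto
    then show False
      using funpow_neq_before_least_power[OF finite_D bij_ph rho_in_D, of t' t] t' by auto
  qed
qed (use assms in simp)

lemma pos_inj: "x1 \<in> outer \<Longrightarrow> x2 \<in> outer \<Longrightarrow> pos x1 = pos x2 \<Longrightarrow> x1 = x2"
  using pos_props(3) by metis

lemma pos_less_face_len: "x \<in> outer \<Longrightarrow> x \<noteq> rho \<Longrightarrow> pos x < face_len"
  using pos_props[of x] face_len_props(2) by (metis le_neq_implies_less)

lemma tail_rho: "tail rho = {}"
  using pos_funpow[of face_len] face_len_props by (simp add: tail_def)

lemma tail_outer: "tail x \<subseteq> outer"
  by (auto simp: tail_def outer_face_def)

lemma tail_D: "tail x \<subseteq> D"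
  using tail_outer outer_sub_D by blast

lemma tail_antimono:
  assumes "x1 \<in> outer" "x2 \<in> outer" "pos x1 < pos x2"
  shows "insert x2 (tail x2) \<subseteq> tail x1"
proof -
  have "x2 \<in> tail x1"
    using pos_props[OF assms(2)] assms(3) unfolding tail_def
    by (intro image_eqI[where x = "pos x2"]) auto
  moreover have "tail x2 \<subseteq> tail x1"
    using assms(3) unfolding tail_def by (intro image_mono) auto
  ultimately show ?thesis by blast
qed

lemma rho_last_visit: "rho \<in> last_visits"
  using tail_rho rho_outer by (simp add: last_visits_def)

lemma last_visits_outer: "last_visits \<subseteq> outer"
  by (auto simp: last_visits_def)

end

section \<open>Extensions that are one-corner components\<close>

context nonempty_planar_map
begin

lemma orb_sigma_ext_Some:
  assumes "x \<in> insert new_end D"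
  shows "orb (sigma (ext (Some x))) new_root = insert new_root (orb sigma_end x)"
    "card (orb (sigma (ext (Some x))) ` D_ext) = card (orb sg ` D)"
proof -
  have g: "sigma (ext (Some x)) x = new_root" "sigma (ext (Some x)) new_root = sigma_end x"
    "\<forall>z\<in>insert new_end D-{x}. sigma (ext (Some x)) z = sigma_end z"
    using assms new_root_notin by (auto simp: sigma_ext_Some insert_after_def)
  have fin: "finite (insert new_end D)" using finite_D by simp
  note ins = fin bij_sigma_end assms new_root_notin g
  show "orb (sigma (ext (Some x))) new_root = insert new_root (orb sigma_end x)"
    using orb_insert_point(2)[OF ins] .
  show "card (orb (sigma (ext (Some x))) ` D_ext) = card (orb sg ` D)"
    using card_orbits_insert_point[OF ins] card_orbits_insert_point[OF sigma_end_props]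
    by (simp add: D_ext_def)
qed

lemma leaf_extension: "one_corner (ext None)" "outv (ext None) = outv M + 1"
proof -
  let ?s = "sigma (ext None)" and ?p = "phi (ext None)"
  have choice: "None \<in> choices" by (simp add: choices_def)
  have fin: "finite (insert new_end D)" using finite_D by simp
  have rho: "rho \<in> insert new_end D" using rho_in_D by simp
  have s: "?s new_root = new_root" "\<forall>z\<in>insert new_end D. ?s z = sigma_end z"
    using new_root_notin by (auto simp: sigma_ext_None)
  note fp = bij_sigma_end new_root_notin s
  have other: "\<forall>z\<in>D-{rho}. ?p z = phi_end z"
    using sigma_ext_None_at(4) alpha_ext_D[OF sg_in_D] phi_end_eq by (simp add: phi_ext phi_eq)
  have p: "?p rho = new_root" "?p new_root = phi_end rho" "\<forall>z\<in>insert new_end D - {rho}. ?p z = phi_end z"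
    using sigma_ext_None_at(1-3) other alpha_ext_D[OF sg_in_D[OF rho_in_D]] new_darts_distinct
    by (auto simp: phi_ext phi_end_rho phi_end_new_end alpha_ext_new_end alpha_ext_new_root phi_eq)
  note ins = fin bij_phi_end rho new_root_notin p
  have "card (orb ?s ` D_ext) + card (orb ?p ` D_ext) = card (orb sg ` D) + card (orb ph ` D) + 1"
    using card_orbits_add_fixpoint[OF fin fp] card_orbits_insert_point[OF sigma_end_props]
      card_orbits_insert_point[OF ins] card_orbits_insert_point[OF phi_end_props]
    by (simp add: D_ext_def)
  then have planar: "rooted_planar_map (ext None)" by (rule rooted_planar_map_extI[OF choice])
  have face: "orb ?p new_root = insert new_root (insert new_end outer)"
    using orb_insert_point(2)[OF ins] orb_insert_point(1)[OF phi_end_props] by (simp add: outer_face_def)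
  have vertex: "orb ?s new_root = {new_root}" using orb_add_fixpoint(1)[OF bij_sigma_end s] .
  show "one_corner (ext None)" using one_corner_extI[OF planar] face vertex by auto
  have "orb ?s new_end = orb ?s rho"
    using orb_add_fixpoint(2)[OF bij_sigma_end s] orb_insert_point(1,2)[OF sigma_end_props] rho_in_D by simp
  then have "orb ?s ` insert new_root (insert new_end outer) = orb ?s ` insert new_root outer"
    using rho_outer by auto
  also have "card \<dots> = card (orb ?s ` outer) + 1"
    using vertex finite_outer outer_sub_D new_root_notin by (intro card_orbits_insert_disjoint) auto
  finally show "outv (ext None) = outv M + 1"
    using outv_ext[of None] face card_orbits_sigma_ext[OF choice outer_sub_D] by (simp add: outv_eq)
qed

lemma root_extension: "one_corner (ext (Some rho))" "outv (ext (Some rho)) = 1"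
proof -
  let ?p = "phi (ext (Some rho))"
  have choice: "Some rho \<in> choices" using rho_in_D by (simp add: choices_def)
  have fin: "finite (insert new_end D)" using finite_D by simp
  have other: "\<forall>z\<in>D-{rho}. ?p z = phi_end z"
    using sigma_ext_rho_at(4) alpha_ext_D[OF sg_in_D] phi_end_eq by (simp add: phi_ext phi_eq)
  have p: "?p new_root = new_root" "\<forall>z\<in>insert new_end D. ?p z = phi_end z"
    using sigma_ext_rho_at(1-3) other alpha_ext_D[OF sg_in_D[OF rho_in_D]]
    by (auto simp: phi_ext phi_end_rho phi_end_new_end alpha_ext_new_end alpha_ext_new_root phi_eq)
  have "card (orb (sigma (ext (Some rho))) ` D_ext) + card (orb ?p ` D_ext)
      = card (orb sg ` D) + card (orb ph ` D) + 1"
    using orb_sigma_ext_Some(2)[of rho] rho_in_D card_orbits_add_fixpoint[OF fin bij_phi_end new_root_notin p]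
      card_orbits_insert_point[OF phi_end_props]
    by (simp add: D_ext_def)
  then have planar: "rooted_planar_map (ext (Some rho))" by (rule rooted_planar_map_extI[OF choice])
  have face: "orb ?p new_root = {new_root}" using orb_fixpoint p(1) by metis
  show "one_corner (ext (Some rho))" using one_corner_extI[OF planar] face by auto
  show "outv (ext (Some rho)) = 1" using outv_ext[of "Some rho"] face by simp
qed

lemma phi_ext_at:
  assumes "x \<in> D" "x \<noteq> rho"
  shows "phi (ext (Some x)) rho = new_root" "phi (ext (Some x)) new_root = ph x"
    "phi (ext (Some x)) x = new_end" "phi (ext (Some x)) new_end = ph rho"
    "\<forall>z\<in>D-{rho,x}. phi (ext (Some x)) z = ph z"
  using sigma_ext_at[OF assms] alpha_ext_D[OF sg_in_D] assms rho_in_D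
  by (auto simp: phi_ext alpha_ext_new_end alpha_ext_new_root phi_eq)

lemma orb_phi_ext_at:
  assumes "x \<in> outer" "x \<noteq> rho"
  shows "orb (phi (ext (Some x))) new_root = insert new_root (tail x)"
    "card (orb (phi (ext (Some x))) ` D_ext) = card (orb ph ` D) + 1"
proof -
  have xD: "x \<in> D" using assms(1) outer_sub_D by auto
  have s: "0 < pos x" "pos x < least_power ph rho"
    using pos_props[OF assms(1)] pos_less_face_len[OF assms] by (auto simp: face_len_def)
  have x: "x = (ph ^^ pos x) rho" using pos_props[OF assms(1)] by simp
  note split = s x phi_ext_at[OF xD assms(2)]
  show "orb (phi (ext (Some x))) new_root = insert new_root (tail x)"
    using orb_split_cycle(1)[OF finite_D bij_ph rho_in_D split] by (simp add: tail_def face_len_def)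
  have "bij_betw (phi (ext (Some x))) (D \<union> {new_end, new_root}) (D \<union> {new_end, new_root})"
    using bij_phi_ext[of "Some x"] xD by (simp add: choices_def D_ext_def insert_commute)
  then show "card (orb (phi (ext (Some x))) ` D_ext) = card (orb ph ` D) + 1"
    using card_orbits_split_cycle[OF finite_D bij_ph rho_in_D new_end_notin _ _ split] new_root_notin
    by (simp add: D_ext_def insert_commute)
qed

lemma orb_sigma_ext_at_D:
  assumes "x \<in> D"
  shows "orb (sigma (ext (Some x))) new_root \<inter> D = orb sg x"
  using orb_sigma_ext_Some(1)[of x] orb_insert_point(3)[OF sigma_end_props assms] assms new_root_notin
  by auto

lemma last_visit_extension:
  assumes "x \<in> last_visits" "x \<noteq> rho"
  shows "one_corner (ext (Some x))" "outv (ext (Some x)) = card (orb sg ` tail x) + 1"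
proof -
  let ?s = "sigma (ext (Some x))"
  have x: "x \<in> outer" "tail x \<inter> orb sg x = {}" using assms(1) by (auto simp: last_visits_def)
  have xD: "x \<in> D" using x(1) outer_sub_D by auto
  have choice: "Some x \<in> choices" using xD by (simp add: choices_def)
  note face = orb_phi_ext_at[OF x(1) assms(2)]
  have "card (orb ?s ` D_ext) + card (orb (phi (ext (Some x))) ` D_ext)
      = card (orb sg ` D) + card (orb ph ` D) + 1"
    using orb_sigma_ext_Some(2)[of x] xD face(2) by simp
  then have planar: "rooted_planar_map (ext (Some x))" by (rule rooted_planar_map_extI[OF choice])
  have disjoint: "orb ?s new_root \<inter> tail x = {}"
    using orb_sigma_ext_at_D[OF xD] x(2) tail_D by blast
  then show "one_corner (ext (Some x))" using one_corner_extI[OF planar] face(1) by auto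
  have "card (orb ?s ` insert new_root (tail x)) = card (orb ?s ` tail x) + 1"
    using disjoint finite_subset[OF tail_D finite_D] by (rule card_orbits_insert_disjoint[rotated])
  then show "outv (ext (Some x)) = card (orb sg ` tail x) + 1"
    using outv_ext[of "Some x"] face(1) card_orbits_sigma_ext[OF choice tail_D] by simp
qed

lemma tail_meets_vertex_not_one_corner:
  assumes "x \<in> outer" "x \<noteq> rho" "tail x \<inter> orb sg x \<noteq> {}"
  shows "orb (sigma (ext (Some x))) new_root \<inter> orb (phi (ext (Some x))) new_root \<noteq> {new_root}"
proof -
  have xD: "x \<in> D" using assms(1) outer_sub_D by auto
  obtain z where z: "z \<in> tail x" "z \<in> orb sg x" using assms(3) by auto
  then have "z \<in> orb (sigma (ext (Some x))) new_root \<inter> orb (phi (ext (Some x))) new_root"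
    using orb_sigma_ext_at_D[OF xD] orb_phi_ext_at(1)[OF assms(1,2)] tail_D by auto
  moreover have "z \<noteq> new_root" using z tail_D new_root_notin by auto
  ultimately show ?thesis by blast
qed

lemma off_outer_not_one_corner:
  assumes "x \<in> D" "x \<notin> outer"
  shows "orb (sigma (ext (Some x))) new_root \<inter> orb (phi (ext (Some x))) new_root \<noteq> {new_root}"
proof -
  let ?p = "phi (ext (Some x))" and ?w = "\<lambda>t. (ph ^^ t) x" and ?q = "least_power ph x"
  have xr: "x \<noteq> rho" using assms(2) rho_outer by auto
  note p = phi_ext_at[OF assms(1) xr]
  have q: "0 < ?q" "?w ?q = x" "\<And>t. 0 < t \<Longrightarrow> t < ?q \<Longrightarrow> ?w t \<noteq> x"
    using least_power_bij_betw[OF finite_D bij_ph assms(1)] by auto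
  have "?w t \<noteq> rho" for t
  proof
    assume "?w t = rho"
    then have "x \<in> orb ph rho" using orb_sym[OF finite_D bij_ph assms(1)] orb_funpow by metis
    then show False using assms(2) by (simp add: outer_face_def)
  qed
  then have "?p (?w t) = ?w (Suc t)" if "1 \<le> t" "t < ?q" for t
    using p(5) q(3)[of t] that funpow_in_bij_betw[OF bij_ph assms(1), of t] by auto
  then have "x \<in> orb ?p new_root"
    using orb_walk[of ?p new_root ?w 1 ?q ?q] p(2) q by simp
  moreover have "x \<in> orb (sigma (ext (Some x))) new_root" using orb_sigma_ext_at_D[OF assms(1)] by auto
  moreover have "x \<noteq> new_root" using assms(1) new_root_notin by auto
  ultimately show ?thesis by blast
qed

lemma new_end_not_one_corner:
  "orb (sigma (ext (Some new_end))) new_root \<inter> orb (phi (ext (Some new_end))) new_root \<noteq> {new_root}"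
proof -
  let ?p = "phi (ext (Some new_end))"
  note s = sigma_ext_new_end_at
  have "rho \<in> orb (sigma (ext (Some new_end))) new_root"
    using orb_sigma_ext_Some(1)[of new_end] orb_insert_point(2)[OF sigma_end_props] by simp
  moreover have p: "?p rho = new_root" "?p new_root = ph rho" "\<forall>z\<in>D-{rho}. ?p z = ph z"
    using s alpha_ext_D[OF sg_in_D] rho_in_D by (auto simp: phi_ext alpha_ext_new_end phi_eq)
  have "rho \<in> orb ?p new_root"
    using orb_insert_point(2)[OF finite_D bij_ph rho_in_D _ p] new_root_notin by simp
  ultimately show ?thesis using new_darts_distinct by (metis IntI singletonD)
qed

theorem one_corner_ext_choice:
  assumes "y \<in> choices"
    and "orb (sigma (ext y)) new_root \<inter> orb (phi (ext y)) new_root = {new_root}"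
  shows "y = None \<or> (\<exists>x\<in>last_visits. y = Some x)"
proof (cases y)
  case (Some x)
  then consider "x = new_end" | "x = rho" | "x \<in> D" "x \<noteq> rho"
    using assms(1) by (auto simp: choices_def)
  then show ?thesis
  proof cases
    case 1
    then show ?thesis using new_end_not_one_corner assms(2) Some by simp
  next
    case 2
    then show ?thesis using rho_last_visit Some by blast
  next
    case 3
    then have "x \<in> outer" using off_outer_not_one_corner assms(2) Some by blast
    moreover have "tail x \<inter> orb sg x = {}"
      using tail_meets_vertex_not_one_corner \<open>x \<in> outer\<close> 3 assms(2) Some by blast
    ultimately show ?thesis using Some by (auto simp: last_visits_def)
  qed
qed simp

end

section \<open>Counting the one-corner extensions\<close>

context nonempty_planar_map
begin

definition good_choices :: "nat option set" where "good_choices = insert None (Some ` last_visits)"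
definition tail_count :: "nat option \<Rightarrow> nat" where
  "tail_count y = (case y of None \<Rightarrow> outv M | Some x \<Rightarrow> card (orb sg ` tail x))"

lemma inj_on_orb_last_visits: "inj_on (orb sg) last_visits"
proof (rule inj_onI)
  fix x1 x2 assume x: "x1 \<in> last_visits" "x2 \<in> last_visits" "orb sg x1 = orb sg x2"
  then have outer: "x1 \<in> outer" "x2 \<in> outer" using last_visits_outer by auto
  show "x1 = x2"
  proof (rule ccontr)
    assume "x1 \<noteq> x2"
    then have "pos x1 < pos x2 \<or> pos x2 < pos x1" using pos_inj outer by fastforce
    then have "x2 \<in> tail x1 \<or> x1 \<in> tail x2" using tail_antimono outer by blast
    then show False using x by (auto simp: last_visits_def)
  qed
qed

lemma last_visit_exists:
  assumes "y \<in> outer"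
  shows "\<exists>x\<in>last_visits. orb sg x = orb sg y"
proof -
  define T where "T = {t. 0 < t \<and> t \<le> face_len \<and> (ph ^^ t) rho \<in> orb sg y}"
  have "pos y \<in> T" using pos_props[OF assms] by (simp add: T_def)
  moreover have "finite T" by (simp add: T_def)
  ultimately have max: "Max T \<in> T" "\<And>t. t \<in> T \<Longrightarrow> t \<le> Max T" by (auto intro: Max_in)
  define x where "x = (ph ^^ Max T) rho"
  have "x \<in> outer" by (simp add: x_def outer_face_def)
  have "pos x = Max T" using pos_funpow max(1) by (simp add: T_def x_def)
  have "x \<in> orb sg y" using max(1) by (simp add: T_def x_def)
  then have "orb sg x = orb sg y" using orb_eq[OF finite_D bij_sg] assms outer_sub_D by blast
  moreover have "tail x \<inter> orb sg x = {}"
  proof (rule ccontr)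
    assume "tail x \<inter> orb sg x \<noteq> {}"
    then obtain t where "Suc (pos x) \<le> t" "t \<le> face_len" "(ph ^^ t) rho \<in> orb sg y"
      using \<open>orb sg x = orb sg y\<close> by (auto simp: tail_def)
    then have "t \<in> T" by (simp add: T_def)
    then show False using max(2) \<open>pos x = Max T\<close> \<open>Suc (pos x) \<le> t\<close> by fastforce
  qed
  ultimately show ?thesis using \<open>x \<in> outer\<close> by (auto simp: last_visits_def)
qed

lemma card_last_visits: "card last_visits = outv M"
proof -
  have "orb sg ` outer \<subseteq> orb sg ` last_visits"
  proof
    fix Q assume "Q \<in> orb sg ` outer"
    then obtain y where "y \<in> outer" "Q = orb sg y" by blast
    then show "Q \<in> orb sg ` last_visits" using last_visit_exists by (metis imageI)
  qed
  then have "orb sg ` last_visits = orb sg ` outer" using last_visits_outer by blast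
  then show ?thesis
    using card_image[OF inj_on_orb_last_visits] by (simp add: outv_eq)
qed

lemma tail_count_less:
  assumes "x \<in> last_visits"
  shows "card (orb sg ` tail x) < outv M"
proof -
  have x: "x \<in> outer" "tail x \<inter> orb sg x = {}" using assms by (auto simp: last_visits_def)
  have "orb sg ` tail x \<subseteq> orb sg ` outer - {orb sg x}"
    using x tail_outer orb_self by blast
  then have "card (orb sg ` tail x) \<le> card (orb sg ` outer - {orb sg x})"
    using finite_outer by (intro card_mono) auto
  also have "\<dots> < card (orb sg ` outer)"
    using x(1) finite_outer by (intro card_Diff1_less) auto
  finally show ?thesis by (simp add: outv_eq)
qed

lemma tail_count_strict_antimono:
  assumes "x1 \<in> last_visits" "x2 \<in> last_visits" "pos x1 < pos x2"
  shows "card (orb sg ` tail x2) < card (orb sg ` tail x1)"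
proof -
  have outer: "x1 \<in> outer" "x2 \<in> outer" and "tail x2 \<inter> orb sg x2 = {}"
    using assms(1,2) by (auto simp: last_visits_def)
  then have "orb sg x2 \<notin> orb sg ` tail x2" using orb_self by blast
  then have "orb sg ` tail x2 \<subset> orb sg ` tail x1"
    using tail_antimono[OF outer assms(3)] by auto
  moreover have "finite (orb sg ` tail x1)" using finite_outer tail_outer finite_subset by blast
  ultimately show ?thesis by (simp add: psubset_card_mono)
qed

lemma inj_on_tail_count: "inj_on tail_count good_choices"
proof (rule inj_onI)
  fix y1 y2 assume y: "y1 \<in> good_choices" "y2 \<in> good_choices" "tail_count y1 = tail_count y2"
  have Some_less: "tail_count (Some x) < tail_count None" if "x \<in> last_visits" for x
    using tail_count_less[OF that] by (simp add: tail_count_def)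
  show "y1 = y2"
  proof (cases y1; cases y2)
    fix x1 x2 assume Some: "y1 = Some x1" "y2 = Some x2"
    then have x: "x1 \<in> last_visits" "x2 \<in> last_visits" using y(1,2) by (auto simp: good_choices_def)
    have "card (orb sg ` tail x1) = card (orb sg ` tail x2)" using y(3) Some by (simp add: tail_count_def)
    then have "pos x1 = pos x2"
      using tail_count_strict_antimono[OF x] tail_count_strict_antimono[OF x(2,1)]
      by (metis less_irrefl linorder_neqE_nat)
    then show "y1 = y2" using pos_inj x last_visits_outer Some by auto
  next
    fix x assume "y1 = Some x" "y2 = None"
    then show "y1 = y2" using y Some_less[of x] by (auto simp: good_choices_def)
  next
    fix x assume "y1 = None" "y2 = Some x"
    then show "y1 = y2" using y Some_less[of x] by (auto simp: good_choices_def)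
  qed simp
qed

lemma tail_count_good_choices: "tail_count ` good_choices = {..outv M}"
proof -
  have "tail_count ` good_choices \<subseteq> {..outv M}"
    using tail_count_less by (auto simp: good_choices_def tail_count_def less_imp_le)
  moreover have "card (Some ` last_visits) = outv M"
    using card_last_visits by (simp add: card_image)
  then have "card (tail_count ` good_choices) = outv M + 1"
    using inj_on_tail_count finite_subset[OF last_visits_outer finite_outer]
    by (simp add: card_image good_choices_def)
  ultimately show ?thesis using card_subset_eq[of "{..outv M}"] by simp
qed

lemma good_choice_extension:
  assumes "y \<in> good_choices"
  shows "one_corner (ext y)" "outvU (ext y) = tail_count y"
proof -
  have "one_corner (ext y) \<and> outvU (ext y) = tail_count y"
  proof (cases y)
    case None
    then show ?thesis using leaf_extension by (simp add: outvU_def tail_count_def)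
  next
    case (Some x)
    then have "x \<in> last_visits" using assms by (auto simp: good_choices_def)
    then show ?thesis
      using root_extension last_visit_extension Some tail_rho
      by (cases "x = rho") (auto simp: outvU_def tail_count_def)
  qed
  then show "one_corner (ext y)" "outvU (ext y) = tail_count y" by auto
qed

lemma good_choices_sub: "good_choices \<subseteq> choices"
  using last_visits_outer outer_sub_D by (auto simp: good_choices_def choices_def)

end

section \<open>Every preimage is an extension\<close>

locale Pi_preimage = nonempty_planar_map M for M +
  fixes V :: dmap and f :: "nat \<Rightarrow> nat"
  assumes one_corner_V: "one_corner V" and V_nonempty: "darts V \<noteq> {}"
    and f_bij: "bij_betw f (darts (Pi V)) D"
    and f_hom: "\<forall>z\<in>darts (Pi V). f (alpha (Pi V) z) = al (f z) \<and> f (sigma (Pi V) z) = sg (f z)"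
    and f_root: "darts (Pi V) \<noteq> {} \<longrightarrow> f (root (Pi V)) = rho"
begin

abbreviation "DV \<equiv> darts V"
abbreviation "sV \<equiv> sigma V"
abbreviation "r \<equiv> root V"
abbreviation "r' \<equiv> alpha V (root V)"
abbreviation "D' \<equiv> darts (Pi V)"

definition g :: "nat \<Rightarrow> nat" where "g z = (if z = r then new_root else if z = r' then new_end else f z)"

lemma V_facts: "finite DV" "bij_betw sV DV DV" "r \<in> DV" "r' \<in> DV" "r \<noteq> r'" "alpha V r' = r"
  "\<forall>x\<in>DV. alpha V x \<in> DV \<and> alpha V x \<noteq> x \<and> alpha V (alpha V x) = x"
  using one_corner_V V_nonempty unfolding one_corner_def rooted_planar_map_def by auto

lemma D'_eq: "D' = DV - {r, r'}"
  by (simp add: darts_Pi)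

lemma sV_in: "z \<in> DV \<Longrightarrow> sV z \<in> DV"
  using V_facts(2) bij_betw_apply by metis

lemma sV_inj: "z1 \<in> DV \<Longrightarrow> z2 \<in> DV \<Longrightarrow> sV z1 = sV z2 \<Longrightarrow> z1 = z2"
  using V_facts(2) by (metis bij_betw_def inj_onD)

lemma f_in: "z \<in> D' \<Longrightarrow> f z \<in> D"
  using f_bij bij_betw_apply by metis

lemma f_inj: "z1 \<in> D' \<Longrightarrow> z2 \<in> D' \<Longrightarrow> f z1 = f z2 \<Longrightarrow> z1 = z2"
  using f_bij by (metis bij_betw_def inj_onD)

lemma D'_nonempty: "D' \<noteq> {}"
  using f_bij ne by (auto simp: bij_betw_def)

lemma f_skip: "z \<in> D' \<Longrightarrow> f (skip_next V z) = sg (f z)"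
  using f_hom by (simp add: sigma_Pi)

lemma f_root_preimage:
  assumes "d \<in> D'" "skip_next V d = skip_next V r'"
  shows "f d = rho"
proof -
  have "(THE d'. d' \<in> D' \<and> skip_next V d' = skip_next V r') = d"
  proof (rule the_equality)
    fix d' assume "d' \<in> D' \<and> skip_next V d' = skip_next V r'"
    then show "d' = d" using assms f_skip f_in f_inj sg_in_D bij_sg by (metis bij_betw_def inj_onD)
  qed (use assms in simp)
  then show ?thesis using f_root D'_nonempty root_Pi[of V] by simp
qed

text \<open>Otherwise the root edge would be a whole component of \<open>V\<close>, leaving \<open>Pi V\<close> empty.\<close>

lemma root_edge_not_closed: "\<not> (sV r \<in> {r, r'} \<and> sV r' \<in> {r, r'})"
proof
  assume closed: "sV r \<in> {r, r'} \<and> sV r' \<in> {r, r'}"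
  then have "\<forall>x\<in>{r, r'}. alpha V x \<in> {r, r'} \<and> sV x \<in> {r, r'}" using V_facts(6) by auto
  then have "v \<in> {r, r'}" if "v \<in> DV" for v
    using adj_rtrancl_closed[of "{r, r'}" V r v] that V_facts(3) one_corner_V
    unfolding one_corner_def rooted_planar_map_def connected_map_adj by blast
  then show False using D'_nonempty D'_eq by auto
qed

text \<open>If \<open>r'\<close> were a leaf, the predecessor \<open>c\<close> of \<open>r\<close> in the rotation would give a second
  corner of the root vertex on the outer face, as \<open>phi V\<close> maps \<open>c\<close> to \<open>r'\<close> and \<open>r'\<close> to \<open>r\<close>.\<close>

lemma sV_r'_not_fixed: "sV r' \<noteq> r'"
proof
  assume fixed: "sV r' = r'"
  obtain c where c: "c \<in> DV" "sV c = r" using V_facts(2,3) by (metis bij_betw_imp_surj_on imageE)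
  have bph: "bij_betw (phi V) DV DV"
    using bij_betw_trans[OF V_facts(2) bij_betw_involution] V_facts(7) by (simp add: phi_def)
  have "(phi V ^^ 2) c = r" using fixed c V_facts(6) by (simp add: phi_def numeral_2_eq_2)
  then have "c \<in> orb (phi V) r" using orb_sym[OF V_facts(1) bph c(1)] orb_funpow by metis
  moreover have "c \<in> orb sV r" using orb_sym[OF V_facts(1,2) c(1)] c(2) orb_apply_self by metis
  ultimately have "c = r"
    using one_corner_V V_nonempty by (auto simp: one_corner_def outer_face_def)
  then show False using root_edge_not_closed fixed c(2) by auto
qed

lemma g_D': "z \<in> D' \<Longrightarrow> g z = f z"
  using D'_eq by (simp add: g_def)

lemma g_bij: "bij_betw g DV D_ext"
proof -
  have D: "DV = insert r (insert r' D')" using V_facts(3,4) D'_eq by auto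
  have img: "g ` D' = D" using f_bij g_D' by (simp add: bij_betw_def cong: image_cong)
  have g: "g r = new_root" "g r' = new_end" using V_facts(5) by (simp_all add: g_def)
  have "inj_on g D'" using f_inj g_D' by (auto simp: inj_on_def)
  then have "inj_on g DV"
    unfolding D using img g new_notin new_root_notin D'_eq by (auto simp: inj_on_insert)
  moreover have "g ` DV = D_ext" using D img g by (simp add: D_ext_def)
  ultimately show ?thesis by (simp add: bij_betw_def)
qed

lemma g_alpha:
  assumes "z \<in> DV"
  shows "g (alpha V z) = alpha_ext (g z)"
proof -
  consider "z = r" | "z = r'" | "z \<in> D'" using assms D'_eq by auto
  then show ?thesis
  proof cases
    case 3
    then have z: "z \<in> DV" "z \<noteq> r" "z \<noteq> r'" using D'_eq by auto
    have "alpha V z \<in> DV" using V_facts(7) z by auto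
    moreover have "alpha V z \<noteq> r" using V_facts(7) z(1,3) by metis
    moreover have "alpha V z \<noteq> r'" using V_facts(3,7) z(1,2) by metis
    ultimately have "alpha V z \<in> D'" using D'_eq by auto
    then have "g (alpha V z) = f (alpha (Pi V) z)" using g_D' by (simp add: alpha_Pi)
    also have "\<dots> = al (f z)" using f_hom 3 by blast
    also have "\<dots> = alpha_ext (g z)" using alpha_ext_D[OF f_in[OF 3]] g_D'[OF 3] by simp
    finally show ?thesis .
  qed (use V_facts(5,6) alpha_ext_new_end alpha_ext_new_root in \<open>simp_all add: g_def\<close>)
qed

lemma map_iso_extI:
  assumes "\<And>z. z \<in> DV \<Longrightarrow> g (sV z) = sigma (ext y) (g z)"
  shows "map_iso V (ext y)"
  unfolding map_iso_def
  using g_bij g_alpha assms V_nonempty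
  by (intro exI[of _ g]) (simp add: darts_ext alpha_ext_eq root_ext g_def)

lemma g_sigma_generic:
  assumes "z \<in> D'" "sV z \<notin> {r, r'}" "sigma (ext y) (f z) = sg (f z)"
  shows "g (sV z) = sigma (ext y) (g z)"
proof -
  have "skip_next V z = sV z" using skip_next_eq1[of V z] assms(2) by simp
  then have "f (sV z) = sg (f z)" using f_skip[OF assms(1)] by simp
  moreover have "sV z \<in> D'" using assms(1,2) D'_eq sV_in by auto
  ultimately show ?thesis using assms(1,3) g_D' by simp
qed

definition pred_r :: nat where "pred_r = the_inv_into DV sV r"
definition pred_r' :: nat where "pred_r' = the_inv_into DV sV r'"

lemma pred_r: "pred_r \<in> DV" "sV pred_r = r"
  and pred_r': "pred_r' \<in> DV" "sV pred_r' = r'"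
  using V_facts(2-4) the_inv_into_into[of sV DV] f_the_inv_into_f_bij_betw[of sV DV DV]
  by (auto simp: pred_r_def pred_r'_def bij_betw_def)

lemma g_sigma_other:
  assumes "z \<in> D'" "z \<noteq> pred_r" "z \<noteq> pred_r'"
    and "\<forall>z\<in>D-S. sigma (ext y) z = sg z" "f z \<notin> S"
  shows "g (sV z) = sigma (ext y) (g z)"
proof -
  have "sV z \<notin> {r, r'}" using assms(1-3) pred_r pred_r' sV_inj D'_eq by auto
  then show ?thesis using g_sigma_generic assms(1,4,5) f_in by blast
qed

lemma skip_next_V1: "sV z \<notin> {r, r'} \<Longrightarrow> skip_next V z = sV z"
  using skip_next_eq1[of V z] by simp

lemma skip_next_V2: "sV z \<in> {r, r'} \<Longrightarrow> sV (sV z) \<notin> {r, r'} \<Longrightarrow> skip_next V z = sV (sV z)"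
  using skip_next_eq2[of V z] by simp

lemma skip_next_V3: "sV z \<in> {r, r'} \<Longrightarrow> sV (sV z) \<in> {r, r'} \<Longrightarrow> sV (sV (sV z)) \<notin> {r, r'} \<Longrightarrow>
    skip_next V z = sV (sV (sV z))"
  using skip_next_eq3[of V z] by simp

lemma D'_iff: "z \<in> D' \<longleftrightarrow> z \<in> DV \<and> z \<noteq> r \<and> z \<noteq> r'"
  using D'_eq by auto

lemma pred_r'_D':
  assumes "sV r \<noteq> r'"
  shows "pred_r' \<in> D'"
proof -
  have "pred_r' \<noteq> r" using assms pred_r'(2) by metis
  moreover have "pred_r' \<noteq> r'" using sV_r'_not_fixed pred_r'(2) by metis
  ultimately show ?thesis using pred_r'(1) D'_iff by blast
qed

lemma pred_r_D':
  assumes "sV r \<noteq> r" "sV r' \<noteq> r"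
  shows "pred_r \<in> D'"
proof -
  have "pred_r \<noteq> r" "pred_r \<noteq> r'" using assms pred_r(2) by metis+
  then show ?thesis using pred_r(1) D'_iff by blast
qed

lemma sV_D': "z \<in> DV \<Longrightarrow> sV z \<noteq> r \<Longrightarrow> sV z \<noteq> r' \<Longrightarrow> sV z \<in> D'"
  using sV_in D'_iff by blast

lemma g_r: "g r = new_root" and g_r': "g r' = new_end"
  using V_facts(5) by (simp_all add: g_def)

text \<open>The four cases below are the possible positions of the root edge in the rotation of
  \<open>V\<close>.  In each, the root of \<open>Pi V\<close> (which \<open>f\<close> maps to \<open>rho\<close>) is the predecessor of \<open>r'\<close>
  or of \<open>r\<close>, and \<open>g\<close> turns \<open>sV\<close> into the rotation of the matching extension.\<close>

lemma iso_ext_None: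
  assumes "sV r = r"
  shows "map_iso V (ext None)"
proof -
  let ?e = pred_r' and ?w = "sV r'"
  have e: "?e \<in> D'" using pred_r'_D' assms V_facts(5) by metis
  have "?w \<noteq> r" using assms sV_inj V_facts(3-5) by metis
  then have w: "?w \<in> D'" using sV_D' V_facts(4) sV_r'_not_fixed by blast
  have "skip_next V ?e = ?w" using skip_next_V2[of ?e] pred_r'(2) w D'_iff by simp
  moreover have "skip_next V r' = ?w" using skip_next_V1[of r'] w D'_iff by simp
  ultimately have fe: "f ?e = rho" and fw: "f ?w = sg rho"
    using f_root_preimage[OF e] f_skip[OF e] by auto
  show ?thesis
  proof (rule map_iso_extI)
    fix z assume "z \<in> DV"
    then consider "z = r" | "z = r'" | "z = ?e" | "z \<in> D'" "z \<noteq> ?e" "z \<noteq> pred_r"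
      using D'_iff pred_r assms sV_inj V_facts(3) by metis
    then show "g (sV z) = sigma (ext None) (g z)"
    proof cases
      case 1
      then show ?thesis using assms g_r sigma_ext_None_at(3) by simp
    next
      case 2
      then show ?thesis using g_r' g_D'[OF w] fw sigma_ext_None_at(2) by simp
    next
      case 3
      then show ?thesis using pred_r'(2) g_r' g_D'[OF e] fe sigma_ext_None_at(1) by simp
    next
      case 4
      have "f z \<noteq> rho" using fe f_inj[OF 4(1) e] 4(2) by metis
      then show ?thesis using g_sigma_other[OF 4(1,3,2)] sigma_ext_None_at(4) by blast
    qed
  qed
qed

lemma iso_ext_new_end:
  assumes "sV r' = r"
  shows "map_iso V (ext (Some new_end))"
proof -
  let ?e = pred_r' and ?w = "sV r"
  have e: "?e \<in> D'" using pred_r'_D' assms root_edge_not_closed by blast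
  have "?w \<noteq> r" using assms sV_inj V_facts(3-5) by metis
  moreover have "?w \<noteq> r'" using pred_r' e sV_inj V_facts(3) D'_iff by metis
  ultimately have w: "?w \<in> D'" using sV_D' V_facts(3) by blast
  have "skip_next V ?e = ?w" using skip_next_V3[of ?e] pred_r'(2) assms w D'_iff by simp
  moreover have "skip_next V r' = ?w" using skip_next_V2[of r'] assms w D'_iff by simp
  ultimately have fe: "f ?e = rho" and fw: "f ?w = sg rho"
    using f_root_preimage[OF e] f_skip[OF e] by auto
  show ?thesis
  proof (rule map_iso_extI)
    fix z assume "z \<in> DV"
    then consider "z = r" | "z = r'" | "z = ?e" | "z \<in> D'" "z \<noteq> ?e" "z \<noteq> pred_r"
      using D'_iff pred_r assms sV_inj V_facts(4) by metis
    then show "g (sV z) = sigma (ext (Some new_end)) (g z)"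
    proof cases
      case 1
      then show ?thesis using g_r g_D'[OF w] fw sigma_ext_new_end_at(3) by simp
    next
      case 2
      then show ?thesis using assms g_r g_r' sigma_ext_new_end_at(2) by simp
    next
      case 3
      then show ?thesis using pred_r'(2) g_r' g_D'[OF e] fe sigma_ext_new_end_at(1) by simp
    next
      case 4
      have "f z \<noteq> rho" using fe f_inj[OF 4(1) e] 4(2) by metis
      then show ?thesis using g_sigma_other[OF 4(1,3,2)] sigma_ext_new_end_at(4) by blast
    qed
  qed
qed

lemma iso_ext_rho:
  assumes "sV r = r'"
  shows "map_iso V (ext (Some rho))"
proof -
  let ?c = pred_r and ?w = "sV r'"
  have "sV r' \<noteq> r" using assms root_edge_not_closed by blast
  then have c: "?c \<in> D'" and w: "?w \<in> D'"
    using pred_r_D' sV_D' assms V_facts(4,5) sV_r'_not_fixed by metis+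
  have "skip_next V ?c = ?w" using skip_next_V3[of ?c] pred_r(2) assms w D'_iff by simp
  moreover have "skip_next V r' = ?w" using skip_next_V1[of r'] w D'_iff by simp
  ultimately have fc: "f ?c = rho" and fw: "f ?w = sg rho"
    using f_root_preimage[OF c] f_skip[OF c] by auto
  show ?thesis
  proof (rule map_iso_extI)
    fix z assume "z \<in> DV"
    then consider "z = r" | "z = r'" | "z = ?c" | "z \<in> D'" "z \<noteq> ?c" "z \<noteq> pred_r'"
      using D'_iff pred_r' assms sV_inj V_facts(3) by metis
    then show "g (sV z) = sigma (ext (Some rho)) (g z)"
    proof cases
      case 1
      then show ?thesis using assms g_r g_r' sigma_ext_rho_at(2) by simp
    next
      case 2
      then show ?thesis using g_r' g_D'[OF w] fw sigma_ext_rho_at(3) by simp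
    next
      case 3
      then show ?thesis using pred_r(2) g_r g_D'[OF c] fc sigma_ext_rho_at(1) by simp
    next
      case 4
      have "f z \<noteq> rho" using fc f_inj[OF 4(1) c] 4(2) by metis
      then show ?thesis using g_sigma_other[OF 4(1,2,3)] sigma_ext_rho_at(4) by blast
    qed
  qed
qed

lemma iso_ext_at:
  assumes "sV r \<noteq> r" "sV r \<noteq> r'" "sV r' \<noteq> r"
  shows "\<exists>x\<in>D. x \<noteq> rho \<and> map_iso V (ext (Some x))"
proof -
  let ?c = pred_r and ?e = pred_r' and ?u = "sV r" and ?w = "sV r'"
  have c: "?c \<in> D'" and e: "?e \<in> D'" and u: "?u \<in> D'" and w: "?w \<in> D'"
    using pred_r_D' pred_r'_D' sV_D' assms V_facts(3,4) sV_r'_not_fixed by metis+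
  have "skip_next V ?e = ?w" using skip_next_V2[of ?e] pred_r'(2) w D'_iff by simp
  moreover have "skip_next V r' = ?w" using skip_next_V1[of r'] w D'_iff by simp
  moreover have "skip_next V ?c = ?u" using skip_next_V2[of ?c] pred_r(2) u D'_iff by simp
  ultimately have fe: "f ?e = rho" and fw: "f ?w = sg rho" and fu: "f ?u = sg (f ?c)"
    using f_root_preimage[OF e] f_skip[OF e] f_skip[OF c] by auto
  have "?c \<noteq> ?e" using pred_r(2) pred_r'(2) V_facts(5) by metis
  then have x: "f ?c \<in> D" "f ?c \<noteq> rho" using f_in[OF c] fe f_inj[OF c e] by auto
  note s = sigma_ext_at[OF x]
  have "map_iso V (ext (Some (f ?c)))"
  proof (rule map_iso_extI)
    fix z assume "z \<in> DV"
    then consider "z = r" | "z = r'" | "z = ?c" | "z = ?e" | "z \<in> D'" "z \<noteq> ?c" "z \<noteq> ?e"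
      using D'_iff by blast
    then show "g (sV z) = sigma (ext (Some (f ?c))) (g z)"
    proof cases
      case 1
      then show ?thesis using g_r g_D'[OF u] fu s(2) by simp
    next
      case 2
      then show ?thesis using g_r' g_D'[OF w] fw s(4) by simp
    next
      case 3
      then show ?thesis using pred_r(2) g_r g_D'[OF c] s(1) by simp
    next
      case 4
      then show ?thesis using pred_r'(2) g_r' g_D'[OF e] fe s(3) by simp
    next
      case 5
      have "f z \<notin> {rho, f ?c}" using fe f_inj[OF 5(1) e] f_inj[OF 5(1) c] 5(2,3) by auto
      then show ?thesis using g_sigma_other[OF 5] s(5) by blast
    qed
  qed
  then show ?thesis using x by blast
qed

theorem exists_iso_ext: "\<exists>y\<in>choices. map_iso V (ext y)"
proof -
  consider "sV r = r" | "sV r' = r" | "sV r = r'" | "sV r \<noteq> r" "sV r \<noteq> r'" "sV r' \<noteq> r"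
    by blast
  then show ?thesis
  proof cases
    case 1
    then show ?thesis using iso_ext_None by (auto simp: choices_def)
  next
    case 2
    then show ?thesis using iso_ext_new_end by (auto simp: choices_def)
  next
    case 3
    then show ?thesis using iso_ext_rho rho_in_D by (auto simp: choices_def)
  next
    case 4
    then show ?thesis using iso_ext_at by (auto simp: choices_def)
  qed
qed

end

context nonempty_planar_map
begin

theorem Pi_preimage_ext:
  assumes "one_corner V" "darts V \<noteq> {}" "map_iso (Pi V) M"
  shows "\<exists>y\<in>choices. map_iso V (ext y)"
proof -
  obtain f where "bij_betw f (darts (Pi V)) D"
    "\<forall>z\<in>darts (Pi V). f (alpha (Pi V) z) = al (f z) \<and> f (sigma (Pi V) z) = sg (f z)"
    "darts (Pi V) \<noteq> {} \<longrightarrow> f (root (Pi V)) = rho"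
    using assms(3) unfolding map_iso_def by blast
  then interpret Pi_preimage M V f using assms(1,2) by unfold_locales
  show ?thesis by (rule exists_iso_ext)
qed

definition choice_of :: "nat \<Rightarrow> nat option" where "choice_of i = the_inv_into good_choices tail_count i"

lemma bij_betw_tail_count: "bij_betw tail_count good_choices {..outv M}"
  using inj_on_tail_count tail_count_good_choices by (simp add: bij_betw_def)

lemma choice_of: "i \<le> outv M \<Longrightarrow> choice_of i \<in> good_choices \<and> tail_count (choice_of i) = i"
  using bij_betw_tail_count the_inv_into_into[of tail_count good_choices i]
    f_the_inv_into_f_bij_betw[of tail_count good_choices "{..outv M}" i]
  by (auto simp: choice_of_def bij_betw_def)

theorem Pi_preimages_enumerated:
  "\<exists>U :: nat \<Rightarrow> dmap.
     (\<forall>i\<le>outv M. one_corner (U i) \<and> darts (U i) \<noteq> {} \<and> map_iso (Pi (U i)) M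
                  \<and> nedges (U i) = nedges M + 1 \<and> outvU (U i) = i) \<and>
     (\<forall>i\<le>outv M. \<forall>j\<le>outv M. map_iso (U i) (U j) \<longrightarrow> i = j) \<and>
     (\<forall>V. one_corner V \<and> darts V \<noteq> {} \<and> map_iso (Pi V) M \<longrightarrow> (\<exists>i\<le>outv M. map_iso V (U i)))"
  (is "\<exists>U. ?preimages U \<and> ?distinct U \<and> ?complete U")
proof -
  let ?U = "\<lambda>i. ext (choice_of i)"
  have preimages: "?preimages ?U"
    using choice_of good_choice_extension Pi_ext_iso[OF subsetD[OF good_choices_sub]] nedges_ext
    by (simp add: darts_ext D_ext_def)
  have distinct: "?distinct ?U"
  proof (intro allI impI)
    fix i j assume "i \<le> outv M" "j \<le> outv M" and iso: "map_iso (?U i) (?U j)"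
    note i = choice_of[OF \<open>i \<le> outv M\<close>] and j = choice_of[OF \<open>j \<le> outv M\<close>]
    have "rooted_planar_map (?U i)"
      using good_choice_extension(1) i by (simp add: one_corner_def)
    then have "outv (?U i) = outv (?U j)"
      using map_iso_outv[OF iso] by (simp add: darts_ext D_ext_def)
    then show "i = j"
      using good_choice_extension(2)[of "choice_of i"] good_choice_extension(2)[of "choice_of j"] i j
      by (simp add: outvU_def)
  qed
  have complete: "?complete ?U"
  proof (intro allI impI)
    fix V assume V: "one_corner V \<and> darts V \<noteq> {} \<and> map_iso (Pi V) M"
    then obtain y where y: "y \<in> choices" and iso: "map_iso V (ext y)"
      using Pi_preimage_ext by blast
    have "rooted_planar_map V" "orb (sigma V) (root V) \<inter> orb (phi V) (root V) = {root V}"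
      using V by (auto simp: one_corner_def outer_face_def)
    then have "orb (sigma (ext y)) new_root \<inter> orb (phi (ext y)) new_root = {new_root}"
      using map_iso_one_corner_root[OF iso] V by (simp add: root_ext)
    then have "y \<in> good_choices"
      using one_corner_ext_choice[OF y] by (auto simp: good_choices_def)
    then have "choice_of (tail_count y) = y" "tail_count y \<le> outv M"
      using inj_on_tail_count tail_count_good_choices by (auto simp: choice_of_def the_inv_into_f_f)
    then show "\<exists>i\<le>outv M. map_iso V (?U i)"
      using iso by (intro exI[of _ "tail_count y"]) simp
  qed
  show ?thesis by (intro exI[of _ ?U] conjI) (fact preimages, fact distinct, fact complete)
qed

end

section \<open>The empty map\<close>

definition swap01 :: "nat \<Rightarrow> nat" where
  "swap01 z = (if z = 0 then 1 else if z = 1 then 0 else z)"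

definition loop_map :: dmap where "loop_map = \<lparr>darts = {0, 1}, alpha = swap01, sigma = swap01, root = 0\<rparr>"
definition edge_map :: dmap where "edge_map = \<lparr>darts = {0, 1}, alpha = swap01, sigma = id, root = 0\<rparr>"

lemma swap01_simps [simp]: "swap01 0 = 1" "swap01 1 = 0" "swap01 (Suc 0) = 0" "swap01 (swap01 z) = z"
  by (simp_all add: swap01_def)

lemma bij_swap01: "bij_betw swap01 {0, 1} {0, 1}"
  by (rule bij_betw_involution) simp

lemma orb_swap01: "x \<in> {0, 1} \<Longrightarrow> orb swap01 x = {0, 1}"
proof
  assume x: "x \<in> {0, 1}"
  show "orb swap01 x \<subseteq> {0, 1}" by (rule orb_subsetI) (use x in auto)
  have "{x, swap01 x} \<subseteq> orb swap01 x" by simp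
  moreover have "{x, swap01 x} = {0, 1}" using x by auto
  ultimately show "{0, 1} \<subseteq> orb swap01 x" by simp
qed

lemma orbs_swap01: "orb swap01 ` {0, 1} = {{0, 1}}"
  using orb_swap01 by auto

lemma orbs_id: "orb id ` {0, 1} = {{0}, {1 :: nat}}"
  using orb_fixpoint[of id] by simp

lemma one_edge_rooted_planar_map:
  assumes "darts N = {0, 1}" "alpha N = swap01" "sigma N \<in> {swap01, id}" "root N = 0"
  shows "rooted_planar_map N"
proof -
  have "(x, y) \<in> (adj N)\<^sup>*" if "x \<in> darts N" "y \<in> darts N" for x y
  proof (cases "x = y")
    case False
    then have "y = alpha N x" using that unfolding assms(1,2) by auto
    then have "(x, y) \<in> adj N" using that(1) unfolding adj_def by blast
    then show ?thesis by blast
  qed simp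
  then have "connected_map N" by (simp add: connected_map_adj)
  moreover have "nvertices N + nfaces N = nedges N + 2"
  proof -
    from assms(3) consider "sigma N = swap01" | "sigma N = id" by blast
    then show ?thesis
    proof cases
      case 1
      then have "phi N = id" using assms(2) by (simp add: phi_def fun_eq_iff)
      then show ?thesis
        using 1 assms(1) orbs_swap01 orbs_id by (simp add: nvertices_def nfaces_def nedges_def)
    next
      case 2
      then have "phi N = swap01" using assms(2) by (simp add: phi_def)
      then show ?thesis
        using 2 assms(1) orbs_swap01 orbs_id by (simp add: nvertices_def nfaces_def nedges_def)
    qed
  qed
  moreover have "bij_betw (sigma N) (darts N) (darts N)"
    using assms(3) bij_swap01 unfolding assms(1) by auto
  moreover have "\<forall>x\<in>darts N. alpha N x \<in> darts N \<and> alpha N x \<noteq> x \<and> alpha N (alpha N x) = x"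
    using assms(1,2) by simp
  moreover have "finite (darts N)" "darts N \<noteq> {} \<longrightarrow> root N \<in> darts N"
    using assms(1,4) by simp_all
  ultimately show ?thesis
    unfolding rooted_planar_map_def by blast
qed

lemma one_edge_maps:
  "one_corner loop_map" "outv loop_map = 1" "one_corner edge_map" "outv edge_map = 2"
proof -
  have "phi loop_map = id" "phi edge_map = swap01"
    by (simp_all add: loop_map_def edge_map_def phi_def fun_eq_iff)
  then have outer: "outer_face loop_map = {0}" "outer_face edge_map = {0, 1}"
    using orb_fixpoint[of id 0] orb_swap01[of 0]
    by (simp_all add: outer_face_def loop_map_def edge_map_def)
  have "rooted_planar_map loop_map" "rooted_planar_map edge_map"
    by (rule one_edge_rooted_planar_map; simp add: loop_map_def edge_map_def)+
  moreover have "orb (sigma loop_map) 0 = {0, 1}" "orb (sigma edge_map) 0 = {0}"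
    using orb_swap01[of 0] orb_fixpoint[of id 0] by (simp_all add: loop_map_def edge_map_def)
  ultimately show "one_corner loop_map" "one_corner edge_map"
    using outer by (simp_all add: one_corner_def loop_map_def edge_map_def)
  show "outv loop_map = 1" "outv edge_map = 2"
    using outer orbs_id orb_swap01[of 0] by (simp_all add: outv_def loop_map_def edge_map_def)
qed

lemma one_edge_preimage:
  assumes "one_corner V" "darts V \<noteq> {}" "darts (Pi V) = {}"
  shows "map_iso V loop_map \<or> map_iso V edge_map"
proof -
  define r where "r = root V"
  define r' where "r' = alpha V r"
  have V: "r \<in> darts V" "r' \<in> darts V" "r \<noteq> r'" "alpha V r' = r"
    "bij_betw (sigma V) (darts V) (darts V)"
    using assms(1,2) unfolding one_corner_def rooted_planar_map_def r_def r'_def by auto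
  then have darts: "darts V = {r, r'}" using assms(3) by (auto simp: darts_Pi r_def r'_def)
  have sigma: "sigma V r = r \<and> sigma V r' = r' \<or> sigma V r = r' \<and> sigma V r' = r"
    using V(5) V(3) unfolding darts by (auto simp: bij_betw_def inj_on_def doubleton_eq_iff)
  define g where "g z = (if z = r then 0 else 1 :: nat)" for z
  have g: "bij_betw g (darts V) {0, 1}" "\<forall>z\<in>darts V. g (alpha V z) = swap01 (g z)" "g r = 0"
    using V(3,4) unfolding darts by (auto simp: bij_betw_def g_def r'_def)
  from sigma show ?thesis
  proof
    assume "sigma V r = r \<and> sigma V r' = r'"
    then have "map_iso V edge_map"
      unfolding map_iso_def using g V(3) unfolding darts
      by (intro exI[of _ g]) (auto simp: edge_map_def g_def r_def)
    then show ?thesis ..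
  next
    assume "sigma V r = r' \<and> sigma V r' = r"
    then have "map_iso V loop_map"
      unfolding map_iso_def using g V(3) unfolding darts
      by (intro exI[of _ g]) (auto simp: loop_map_def g_def r_def)
    then show ?thesis ..
  qed
qed

lemma map_iso_empty: "darts A = {} \<Longrightarrow> darts B = {} \<Longrightarrow> map_iso A B"
  unfolding map_iso_def by (auto intro: exI[of _ id])

theorem Pi_preimages_of_empty:
  assumes "darts M = {}"
  shows "\<exists>U :: nat \<Rightarrow> dmap.
     (\<forall>i\<le>outv M. one_corner (U i) \<and> darts (U i) \<noteq> {} \<and> map_iso (Pi (U i)) M
                  \<and> nedges (U i) = nedges M + 1 \<and> outvU (U i) = i) \<and>
     (\<forall>i\<le>outv M. \<forall>j\<le>outv M. map_iso (U i) (U j) \<longrightarrow> i = j) \<and>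
     (\<forall>V. one_corner V \<and> darts V \<noteq> {} \<and> map_iso (Pi V) M \<longrightarrow> (\<exists>i\<le>outv M. map_iso V (U i)))"
  (is "\<exists>U. ?preimages U \<and> ?distinct U \<and> ?complete U")
proof -
  let ?U = "\<lambda>i :: nat. if i = 0 then loop_map else edge_map"
  have M: "outv M = 1" "nedges M = 0" using assms by (simp_all add: outv_def nedges_def)
  have "darts loop_map \<noteq> {}" "darts edge_map \<noteq> {}" "nedges loop_map = 1" "nedges edge_map = 1"
    by (simp_all add: loop_map_def edge_map_def nedges_def)
  moreover have "map_iso (Pi loop_map) M" "map_iso (Pi edge_map) M"
    using map_iso_empty[OF _ assms] by (simp_all add: darts_Pi loop_map_def edge_map_def)
  ultimately have loop: "one_corner loop_map \<and> darts loop_map \<noteq> {} \<and> map_iso (Pi loop_map) M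
      \<and> nedges loop_map = nedges M + 1 \<and> outvU loop_map = 0"
    and edge: "one_corner edge_map \<and> darts edge_map \<noteq> {} \<and> map_iso (Pi edge_map) M
      \<and> nedges edge_map = nedges M + 1 \<and> outvU edge_map = 1"
    using one_edge_maps M by (simp_all add: outvU_def)
  have small: "i \<le> outv M \<longleftrightarrow> i = 0 \<or> i = 1" for i using M by auto
  have preimages: "?preimages ?U" using loop edge unfolding small by auto
  have distinct: "?distinct ?U"
  proof (intro allI impI)
    fix i j assume "i \<le> outv M" "j \<le> outv M" and iso: "map_iso (?U i) (?U j)"
    then have ij: "i = 0 \<or> i = 1" "j = 0 \<or> j = 1" using small by blast+
    have "rooted_planar_map (?U i)" "darts (?U i) \<noteq> {}"
      using loop edge by (simp_all add: one_corner_def)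
    then have "outv (?U i) = outv (?U j)" by (rule map_iso_outv[OF iso])
    then show "i = j" using ij one_edge_maps(2,4) by auto
  qed
  have complete: "?complete ?U"
  proof (intro allI impI)
    fix V assume V: "one_corner V \<and> darts V \<noteq> {} \<and> map_iso (Pi V) M"
    then obtain f where "bij_betw f (darts (Pi V)) (darts M)" unfolding map_iso_def by blast
    then have "darts (Pi V) = {}" using assms by (simp add: bij_betw_def)
    then have "map_iso V loop_map \<or> map_iso V edge_map" using one_edge_preimage V by blast
    then show "\<exists>i\<le>outv M. map_iso V (?U i)"
    proof
      assume "map_iso V loop_map"
      then show ?thesis using M by (intro exI[of _ 0]) simp
    next
      assume "map_iso V edge_map"
      then show ?thesis using M by (intro exI[of _ 1]) simp
    qed
  qed
  show ?thesis by (intro exI[of _ ?U] conjI) (fact preimages, fact distinct, fact complete)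
qed

theorem proposition12:
  fixes M :: dmap and n k :: nat
  assumes "rooted_planar_map M" and "nedges M = n" and "outv M = k"
  shows "\<exists>U :: nat \<Rightarrow> dmap.
           (\<forall>i\<le>k. one_corner (U i) \<and> darts (U i) \<noteq> {} \<and> map_iso (Pi (U i)) M
                   \<and> nedges (U i) = n + 1 \<and> outvU (U i) = i) \<and>
           (\<forall>i\<le>k. \<forall>j\<le>k. map_iso (U i) (U j) \<longrightarrow> i = j) \<and>
           (\<forall>V. one_corner V \<and> darts V \<noteq> {} \<and> map_iso (Pi V) M \<longrightarrow>
                 (\<exists>i\<le>k. map_iso V (U i)))"
proof (cases "darts M = {}")
  case True
  show ?thesis using Pi_preimages_of_empty[OF True] unfolding assms(2,3) .
next
  case False
  then interpret nonempty_planar_map M using assms(1) by unfold_locales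
  show ?thesis using Pi_preimages_enumerated unfolding assms(2,3) .
qed
end
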